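(* Consider the FlexGT/Acc-FlexGT recursion in the context, and suppose (S), (V), (G) hold. If $\gamma\le\frac{1}{4L\beta}$, then for all $K\ge1$, $$\frac1K\sum_{k=0}^{K-1}\mathbb{E}\|\nabla f(\bar x_{\beta k})\|^2\le\frac{4\big(\mathbb{E}[f(\bar x_0)]-f^*\big)}{\gamma\beta K}+\frac{4L^2}{n}\frac1K\sum_{k=0}^{K-1}\mathbb{E}\|\tilde{\mathbf x}_{\beta k}\|^2+\frac{2\gamma L}{n}\sigma^2 .$$
   Context: Problem: $n$ nodes, each with $f_i(x)=\mathbb{E}_{\xi_i\sim\mathcal D_i}[f_i(x;\xi_i)]$ on $\mathbb{R}^p$, $f=\frac1n\sum_i f_i$, $f^*=\inf f$ (finite). Stochastic oracle: unbiased $\nabla f_i(x;\xi_i)$, independent samples across nodes and iterations. Assumptions: (S) each $f_i$ has $L$-Lipschitz gradient. (V) $\mathbb{E}\|\nabla f_i(x;\xi_i)-\nabla f_i(x)\|^2\le\sigma^2$. (G) $W$ doubly stochastic, $\rho_W:=\|W-\mathbf J\|_2^2<1$, $\mathbf J=\mathbf 1\mathbf 1^\top/n$. Algorithm: integers $\alpha,\beta\ge1$, stepsize $\gamma>0$; $\bar W=W^\alpha$ (FlexGT) or $\bar W=M_\alpha$ (Acc-FlexGT) with $M_{-1}=M_0=I$, $M_{s+1}=(1+\eta)WM_s-\eta M_{s-1}$, $\eta=\frac{1-\sqrt{1-\rho_W}}{1+\sqrt{1-\rho_W}}$. Iterates $\mathbf x_t,\mathbf y_t\in\mathbb{R}^{n\times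 p}$; snapshot $\mathbf z_t=\mathbf x_{\beta\lfloor t/\beta\rfloor}$; $\nabla G_t$ has rows $\nabla f_i(z_{i,t};\xi_{i,t})$ with fresh samples. $\mathbf y_0=\nabla G_0$. For round $k\ge0$, $j=0,\dots,\beta-2$: $\mathbf x_{\beta k+j+1}=\mathbf x_{\beta k+j}-\gamma\mathbf y_{\beta k+j}$, $\mathbf y_{\beta k+j+1}=\mathbf y_{\beta k+j}+\nabla G_{\beta k+j+1}-\nabla G_{\beta k+j}$; round end: $\mathbf x_{\beta(k+1)}=\bar W(\mathbf x_{\beta k}-\gamma\sum_{j=0}^{\beta-1}\mathbf y_{\beta k+j})$, $\mathbf y_{\beta(k+1)}=\bar W(\mathbf y_{\beta k}+\nabla G_{\beta(k+1)}-\nabla G_{\beta k})$. Notation: $\|\cdot\|$ Euclidean/Frobenius; $\bar x_t=\mathbf 1^\top\mathbf x_t/n$, $\tilde{\mathbf x}_t=\mathbf x_t-\mathbf 1\bar x_t$. *)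

theory Defs
  imports "HOL-Probability.Probability"
begin

type_synonym ('p,'n) mat = "real^'p^'n"

definition Jmat :: "real^'n^'n" where
  "Jmat = (\<chi> i j. 1 / real CARD('n::finite))"

definition doubly_stochastic :: "real^'n^'n \<Rightarrow> bool" where
  "doubly_stochastic W \<longleftrightarrow>
     (\<forall>i j. W $ i $ j \<ge> 0) \<and>
     (\<forall>i. (\<Sum>j\<in>UNIV. W $ i $ j) = 1) \<and>
     (\<forall>j. (\<Sum>i\<in>UNIV. W $ i $ j) = 1)"

definition rhoW :: "real^'n^'n \<Rightarrow> real" where
  "rhoW W = (onorm (\<lambda>v::real^'n. (W - Jmat) *v v))\<^sup>2"

definition matpow :: "real^'n^'n \<Rightarrow> nat \<Rightarrow> real^'n^'n" where
  "matpow W a = ((\<lambda>M. W ** M) ^^ a) (mat 1)"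

definition etaW :: "real^'n^'n \<Rightarrow> real" where
  "etaW W = (1 - sqrt (1 - rhoW W)) / (1 + sqrt (1 - rhoW W))"

text \<open>Accelerated gossip matrices: accM W s = M_s, with M_{-1} = M_0 = I and
  M_{s+1} = (1+eta) W M_s - eta M_{s-1}.\<close>
fun accM :: "real^'n^'n \<Rightarrow> nat \<Rightarrow> real^'n^'n" where
  "accM W 0 = mat 1"
| "accM W (Suc 0) = (1 + etaW W) *\<^sub>R (W ** mat 1) - etaW W *\<^sub>R mat 1"
| "accM W (Suc (Suc s)) = (1 + etaW W) *\<^sub>R (W ** accM W (Suc s)) - etaW W *\<^sub>R accM W s"

definition xbar :: "real^'p^'n \<Rightarrow> real^'p" where
  "xbar X = (1 / real CARD('n::finite)) *\<^sub>R (\<Sum>i\<in>UNIV. X $ i)"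

definition xtilde :: "real^'p^'n \<Rightarrow> real^'p^'n" where
  "xtilde X = (\<chi> i. X $ i - xbar X)"

definition favg :: "('n::finite \<Rightarrow> real^'p \<Rightarrow> real) \<Rightarrow> real^'p \<Rightarrow> real" where
  "favg fi x = (1 / real CARD('n)) * (\<Sum>i\<in>UNIV. fi i x)"

definition gavg :: "('n::finite \<Rightarrow> real^'p \<Rightarrow> real^'p) \<Rightarrow> real^'p \<Rightarrow> real^'p" where
  "gavg gfi x = (1 / real CARD('n)) *\<^sub>R (\<Sum>i\<in>UNIV. gfi i x)"

definition fstar :: "('n::finite \<Rightarrow> real^'p \<Rightarrow> real) \<Rightarrow> real" where
  "fstar fi = (INF x. favg fi x)"

text \<open>Stochastic gradient matrix nabla G_t: row i is g_i(z_{i,t}; xi_{i,t}),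
  with snapshot z_t = x_{beta * floor(t/beta)}.\<close>
definition stoch_grad ::
  "('n::finite \<Rightarrow> real^'p \<Rightarrow> 's \<Rightarrow> real^'p) \<Rightarrow> (nat \<Rightarrow> 'n \<Rightarrow> 'a \<Rightarrow> 's)
   \<Rightarrow> (nat \<Rightarrow> 'a \<Rightarrow> real^'p^'n) \<Rightarrow> nat \<Rightarrow> nat \<Rightarrow> 'a \<Rightarrow> real^'p^'n" where
  "stoch_grad g \<xi> x \<beta> t \<omega> = (\<chi> i. g i (x (\<beta> * (t div \<beta>)) \<omega> $ i) (\<xi> t i \<omega>))"

end

theory Submission
  imports Defs
begin

text \<open>Column sums equal to one make gossip invisible to the network average, and gradient
  tracking keeps the average of y equal to the average of the current stochastic gradients. Hence
  the average u_k = xbar x_(beta k) takes the step u_(k+1) = u_k - gamma S_k, where S_k averages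
  beta n unbiased gradient samples taken at the snapshot x_(beta k); these samples are independent
  of each other and of the snapshot. Conditionally on the snapshot, the descent lemma, the
  variance of S_k and the bound |grad f(u_k) - h_k|^2 <= L^2/n |xtilde_(beta k)|^2 on the distance
  to the averaged local gradients h_k give a one-round decrease of E (f(u_k) - f^*) up to the
  consensus error and the noise. Telescoping over K rounds gives the claim, even with 2, L^2/n and
  gamma L sigma^2/n in place of the three constants 4, 4 L^2/n and 2 gamma L sigma^2/n.

  Finite second moments of the iterates, proved by induction over the rounds, are needed only to
  pass from nonnegative integrals to Bochner expectations at the end.\<close>

lemma borel_measurable_vec_nth [measurable (raw)]:
  fixes f :: "'a \<Rightarrow> 'b::euclidean_space^'i::finite"
  assumes "f \<in> borel_measurable N"
  shows "(\<lambda>\<omega>. f \<omega> $ i) \<in> borel_measurable N"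
proof -
  have "continuous_on UNIV (\<lambda>v::'b^'i. v $ i)" by (intro continuous_intros)
  then show ?thesis using assms by (rule borel_measurable_continuous_on)
qed

lemma borel_measurable_vec_lambda:
  fixes f :: "'i::finite \<Rightarrow> 'a \<Rightarrow> 'b::euclidean_space"
  assumes "\<And>i. f i \<in> borel_measurable N"
  shows "(\<lambda>\<omega>. \<chi> i. f i \<omega>) \<in> borel_measurable N"
proof (subst borel_measurable_euclidean_space, intro ballI)
  fix b :: "'b^'i" assume "b \<in> Basis"
  then obtain i u where b: "b = axis i u" by (auto simp: Basis_vec_def)
  have "(\<lambda>\<omega>. f i \<omega> \<bullet> u) \<in> borel_measurable N" using assms[of i] by measurable
  then show "(\<lambda>\<omega>. (\<chi> j. f j \<omega>) \<bullet> b) \<in> borel_measurable N" by (simp add: b inner_axis)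
qed

lemma norm_vec_power2: "(norm (X :: 'b::real_normed_vector^'i::finite))\<^sup>2 = (\<Sum>i\<in>UNIV. (norm (X $ i))\<^sup>2)"
  by (simp add: norm_vec_def L2_set_def sum_nonneg)

lemma linear_matrix_matrix_mult: "linear (\<lambda>Z::real^'p::finite^'n::finite. (A::real^'n^'m::finite) ** Z)"
  by (rule linearI) (simp_all add: matrix_add_ldistrib matrix_scalar_ac scalar_matrix_assoc)

lemma borel_measurable_matrix_matrix_mult [measurable (raw)]:
  fixes A :: "real^'n::finite^'m::finite"
  assumes "f \<in> borel_measurable N"
  shows "(\<lambda>\<omega>. A ** (f \<omega> :: real^'p::finite^'n)) \<in> borel_measurable N"
proof -
  have "continuous_on UNIV (\<lambda>Z::real^'p^'n. A ** Z)"
    using linear_matrix_matrix_mult by (intro linear_continuous_on) (simp add: linear_conv_bounded_linear)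
  then show ?thesis using assms by (rule borel_measurable_continuous_on)
qed

lemma (in prob_space) distr_pair_indep_set:
  assumes X: "X \<in> measurable M S" and Y: "Y \<in> measurable M T"
    and indep: "indep_set (sigma_sets (space M) {X -` A \<inter> space M | A. A \<in> sets S})
      (sigma_sets (space M) {Y -` A \<inter> space M | A. A \<in> sets T})"
  shows "distr M S X \<Otimes>\<^sub>M distr M T Y = distr M (S \<Otimes>\<^sub>M T) (\<lambda>\<omega>. (X \<omega>, Y \<omega>))"
proof -
  interpret PX: prob_space "distr M S X" using X by (rule prob_space_distr)
  interpret PY: prob_space "distr M T Y" using Y by (rule prob_space_distr)
  show ?thesis
  proof (rule pair_measure_eqI)
    fix A B assume A: "A \<in> sets (distr M S X)" and B: "B \<in> sets (distr M T Y)"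
    have "(\<lambda>\<omega>. (X \<omega>, Y \<omega>)) -` (A \<times> B) \<inter> space M = (X -` A \<inter> space M) \<inter> (Y -` B \<inter> space M)"
      by auto
    moreover have "X -` A \<inter> space M \<in> sigma_sets (space M) {X -` A \<inter> space M | A. A \<in> sets S}"
      "Y -` B \<inter> space M \<in> sigma_sets (space M) {Y -` A \<inter> space M | A. A \<in> sets T}"
      using A B by (auto intro: sigma_sets.Basic)
    ultimately have "emeasure M ((\<lambda>\<omega>. (X \<omega>, Y \<omega>)) -` (A \<times> B) \<inter> space M)
        = emeasure M (X -` A \<inter> space M) * emeasure M (Y -` B \<inter> space M)"
      using indep_setD[OF indep] by (simp add: emeasure_eq_measure measure_nonneg ennreal_mult)
    then show "emeasure (distr M S X) A * emeasure (distr M T Y) B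
        = emeasure (distr M (S \<Otimes>\<^sub>M T) (\<lambda>\<omega>. (X \<omega>, Y \<omega>))) (A \<times> B)"
      using X Y A B by (simp add: emeasure_distr measurable_Pair)
  qed (simp_all add: PX.sigma_finite_measure PY.sigma_finite_measure)
qed

lemma (in prob_space) nn_integral_indep_set_iterated:
  assumes X: "X \<in> measurable M S" and Y: "Y \<in> measurable M T"
    and indep: "indep_set (sigma_sets (space M) {X -` A \<inter> space M | A. A \<in> sets S})
      (sigma_sets (space M) {Y -` A \<inter> space M | A. A \<in> sets T})"
    and F: "F \<in> borel_measurable (S \<Otimes>\<^sub>M T)"
  shows "(\<integral>\<^sup>+\<omega>. F (X \<omega>, Y \<omega>) \<partial>M) = (\<integral>\<^sup>+\<omega>. (\<integral>\<^sup>+\<omega>'. F (X \<omega>, Y \<omega>') \<partial>M) \<partial>M)"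
proof -
  interpret PY: prob_space "distr M T Y" using Y by (rule prob_space_distr)
  have F': "F \<in> borel_measurable (distr M S X \<Otimes>\<^sub>M distr M T Y)"
    using F by (simp add: measurable_cong_sets[OF sets_pair_measure_cong[OF sets_distr sets_distr] refl])
  have inner: "(\<integral>\<^sup>+ y. F (x, y) \<partial>distr M T Y) = (\<integral>\<^sup>+ \<omega>'. F (x, Y \<omega>') \<partial>M)" if "x \<in> space S" for x
    using Y F that by (subst nn_integral_distr) auto
  have inner_meas: "(\<lambda>x. \<integral>\<^sup>+ \<omega>'. F (x, Y \<omega>') \<partial>M) \<in> borel_measurable S"
    using PY.borel_measurable_nn_integral_fst[OF F'] by (subst measurable_cong[OF inner[symmetric]]) auto
  have "(\<integral>\<^sup>+\<omega>. F (X \<omega>, Y \<omega>) \<partial>M) = integral\<^sup>N (distr M (S \<Otimes>\<^sub>M T) (\<lambda>\<omega>. (X \<omega>, Y \<omega>))) F"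
    using X Y F by (subst nn_integral_distr) auto
  also have "\<dots> = (\<integral>\<^sup>+ x. \<integral>\<^sup>+ y. F (x, y) \<partial>distr M T Y \<partial>distr M S X)"
    using PY.nn_integral_fst[OF F'] by (simp add: distr_pair_indep_set[OF X Y indep])
  also have "\<dots> = (\<integral>\<^sup>+ x. \<integral>\<^sup>+ \<omega>'. F (x, Y \<omega>') \<partial>M \<partial>distr M S X)"
    by (intro nn_integral_cong) (simp add: inner)
  also have "\<dots> = (\<integral>\<^sup>+\<omega>. (\<integral>\<^sup>+\<omega>'. F (X \<omega>, Y \<omega>') \<partial>M) \<partial>M)"
    using X inner_meas by (subst nn_integral_distr) auto
  finally show ?thesis .
qed

section \<open>Sums of independent centered vectors\<close>

lemma (in prob_space) indep_var_inner_centered: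
  fixes X Y :: "'a \<Rightarrow> 'v::euclidean_space"
  assumes indep: "indep_var borel X borel Y"
    and X: "integrable M X" and Y: "integrable M Y" and centered: "expectation X = 0"
  shows "integrable M (\<lambda>\<omega>. X \<omega> \<bullet> Y \<omega>) \<and> expectation (\<lambda>\<omega>. X \<omega> \<bullet> Y \<omega>) = 0"
proof -
  have coord: "integrable M (\<lambda>\<omega>. (X \<omega> \<bullet> b) * (Y \<omega> \<bullet> b)) \<and> expectation (\<lambda>\<omega>. (X \<omega> \<bullet> b) * (Y \<omega> \<bullet> b)) = 0"
    for b :: 'v
  proof -
    have ind: "indep_var borel (\<lambda>\<omega>. X \<omega> \<bullet> b) borel (\<lambda>\<omega>. Y \<omega> \<bullet> b)"
      using indep_var_compose[OF indep, of "\<lambda>v. v \<bullet> b" borel "\<lambda>v. v \<bullet> b" borel] by (simp add: comp_def)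
    have int: "integrable M (\<lambda>\<omega>. X \<omega> \<bullet> b)" "integrable M (\<lambda>\<omega>. Y \<omega> \<bullet> b)" using X Y by auto
    have "expectation (\<lambda>\<omega>. X \<omega> \<bullet> b) = 0" using X centered by simp
    then show ?thesis
      using indep_var_lebesgue_integral[OF ind int] indep_var_integrable[OF ind int] by simp
  qed
  have eq: "(\<lambda>\<omega>. X \<omega> \<bullet> Y \<omega>) = (\<lambda>\<omega>. \<Sum>b\<in>Basis. (X \<omega> \<bullet> b) * (Y \<omega> \<bullet> b))"
    by (rule ext) (rule euclidean_inner)
  have "integrable M (\<lambda>\<omega>. \<Sum>b\<in>Basis. (X \<omega> \<bullet> b) * (Y \<omega> \<bullet> b))"
    using coord by (intro Bochner_Integration.integrable_sum) blast
  moreover have "expectation (\<lambda>\<omega>. \<Sum>b\<in>Basis. (X \<omega> \<bullet> b) * (Y \<omega> \<bullet> b)) = 0"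
    using coord by (subst Bochner_Integration.integral_sum) auto
  ultimately show ?thesis by (simp only: eq)
qed

lemma (in prob_space) expectation_norm_centered_sum:
  fixes Z :: "'i \<Rightarrow> 'a \<Rightarrow> 'v::euclidean_space"
  assumes A: "finite A"
    and Z: "\<And>a. a \<in> A \<Longrightarrow> integrable M (Z a)"
    and centered: "\<And>a. a \<in> A \<Longrightarrow> expectation (Z a) = 0"
    and Z2: "\<And>a. a \<in> A \<Longrightarrow> integrable M (\<lambda>\<omega>. (norm (Z a \<omega>))\<^sup>2)"
    and indep: "\<And>a b. a \<in> A \<Longrightarrow> b \<in> A \<Longrightarrow> a \<noteq> b \<Longrightarrow> indep_var borel (Z a) borel (Z b)"
  shows "integrable M (\<lambda>\<omega>. (norm (c + (\<Sum>a\<in>A. Z a \<omega>)))\<^sup>2) \<and>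
    expectation (\<lambda>\<omega>. (norm (c + (\<Sum>a\<in>A. Z a \<omega>)))\<^sup>2) = (norm c)\<^sup>2 + (\<Sum>a\<in>A. expectation (\<lambda>\<omega>. (norm (Z a \<omega>))\<^sup>2))"
proof -
  have cross: "integrable M (\<lambda>\<omega>. Z a \<omega> \<bullet> Z b \<omega>) \<and>
      expectation (\<lambda>\<omega>. Z a \<omega> \<bullet> Z b \<omega>) = (if a = b then expectation (\<lambda>\<omega>. (norm (Z a \<omega>))\<^sup>2) else 0)"
    if "a \<in> A" "b \<in> A" for a b
  proof (cases "a = b")
    case True
    then show ?thesis using Z2[OF that(1)] by (simp add: power2_norm_eq_inner)
  next
    case False
    then show ?thesis using indep_var_inner_centered[OF indep Z Z centered, of a b] that by simp
  qed
  then have cross_int: "integrable M (\<lambda>\<omega>. Z a \<omega> \<bullet> Z b \<omega>)"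
    and cross_exp: "expectation (\<lambda>\<omega>. Z a \<omega> \<bullet> Z b \<omega>) = (if a = b then expectation (\<lambda>\<omega>. (norm (Z a \<omega>))\<^sup>2) else 0)"
    if "a \<in> A" "b \<in> A" for a b
    using that by blast+
  have linear_part: "integrable M (\<lambda>\<omega>. c \<bullet> Z a \<omega>) \<and> expectation (\<lambda>\<omega>. c \<bullet> Z a \<omega>) = 0" if "a \<in> A" for a
    using Z[OF that] centered[OF that] by simp
  have expand: "(\<lambda>\<omega>. (norm (c + (\<Sum>a\<in>A. Z a \<omega>)))\<^sup>2)
      = (\<lambda>\<omega>. c \<bullet> c + (\<Sum>a\<in>A. 2 * (c \<bullet> Z a \<omega>) + (\<Sum>b\<in>A. Z a \<omega> \<bullet> Z b \<omega>)))"
    by (simp add: power2_norm_eq_inner inner_add_left inner_add_right inner_sum_left inner_sum_right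
        inner_commute sum.distrib sum_distrib_left add_ac)
  have summand: "integrable M (\<lambda>\<omega>. 2 * (c \<bullet> Z a \<omega>) + (\<Sum>b\<in>A. Z a \<omega> \<bullet> Z b \<omega>)) \<and>
      expectation (\<lambda>\<omega>. 2 * (c \<bullet> Z a \<omega>) + (\<Sum>b\<in>A. Z a \<omega> \<bullet> Z b \<omega>)) = expectation (\<lambda>\<omega>. (norm (Z a \<omega>))\<^sup>2)"
    if "a \<in> A" for a
  proof -
    have "integrable M (\<lambda>\<omega>. \<Sum>b\<in>A. Z a \<omega> \<bullet> Z b \<omega>)"
      using cross_int that by (intro Bochner_Integration.integrable_sum)
    moreover have "expectation (\<lambda>\<omega>. \<Sum>b\<in>A. Z a \<omega> \<bullet> Z b \<omega>) = expectation (\<lambda>\<omega>. (norm (Z a \<omega>))\<^sup>2)"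
      using cross_int cross_exp that A by (subst Bochner_Integration.integral_sum) simp_all
    ultimately show ?thesis using linear_part[OF that] by simp
  qed
  show ?thesis
    unfolding expand using summand
    by (simp add: Bochner_Integration.integrable_sum Bochner_Integration.integral_sum power2_norm_eq_inner prob_space)
qed

lemma (in prob_space) nn_integral_norm_centered_sum_le:
  fixes Z :: "'i \<Rightarrow> 'a \<Rightarrow> 'v::euclidean_space"
  assumes A: "finite A"
    and Z: "\<And>a. a \<in> A \<Longrightarrow> integrable M (Z a)"
    and centered: "\<And>a. a \<in> A \<Longrightarrow> expectation (Z a) = 0"
    and var: "\<And>a. a \<in> A \<Longrightarrow> (\<integral>\<^sup>+\<omega>. ennreal ((norm (Z a \<omega>))\<^sup>2) \<partial>M) \<le> ennreal s" and "s \<ge> 0"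
    and indep: "\<And>a b. a \<in> A \<Longrightarrow> b \<in> A \<Longrightarrow> a \<noteq> b \<Longrightarrow> indep_var borel (Z a) borel (Z b)"
  shows "(\<integral>\<^sup>+\<omega>. ennreal ((norm (c + (\<Sum>a\<in>A. Z a \<omega>)))\<^sup>2) \<partial>M) \<le> ennreal ((norm c)\<^sup>2 + real (card A) * s)"
proof -
  have meas: "(\<lambda>\<omega>. (norm (Z a \<omega>))\<^sup>2) \<in> borel_measurable M" if "a \<in> A" for a
    using borel_measurable_integrable[OF Z[OF that]] by measurable
  have Z2: "integrable M (\<lambda>\<omega>. (norm (Z a \<omega>))\<^sup>2)" if "a \<in> A" for a
  proof (rule integrableI_bounded)
    show "(\<integral>\<^sup>+\<omega>. ennreal (norm ((norm (Z a \<omega>))\<^sup>2)) \<partial>M) < \<infinity>"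
      using var[OF that] by (simp add: le_less_trans[OF _ ennreal_less_top])
  qed (rule meas[OF that])
  have "expectation (\<lambda>\<omega>. (norm (Z a \<omega>))\<^sup>2) \<le> s" if "a \<in> A" for a
    using var[OF that] \<open>s \<ge> 0\<close> by (subst integral_eq_nn_integral[OF meas[OF that]]) (auto intro: enn2real_leI)
  then have "(norm c)\<^sup>2 + (\<Sum>a\<in>A. expectation (\<lambda>\<omega>. (norm (Z a \<omega>))\<^sup>2)) \<le> (norm c)\<^sup>2 + real (card A) * s"
    using sum_mono[of A _ "\<lambda>_. s"] by simp
  moreover have "integrable M (\<lambda>\<omega>. (norm (c + (\<Sum>a\<in>A. Z a \<omega>)))\<^sup>2) \<and>
      expectation (\<lambda>\<omega>. (norm (c + (\<Sum>a\<in>A. Z a \<omega>)))\<^sup>2) = (norm c)\<^sup>2 + (\<Sum>a\<in>A. expectation (\<lambda>\<omega>. (norm (Z a \<omega>))\<^sup>2))"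
    by (rule expectation_norm_centered_sum[OF A Z centered Z2 indep])
  ultimately show ?thesis
    by (subst nn_integral_eq_integral) (auto intro: ennreal_leI)
qed

definition finite_second_moment ::
    "'a measure \<Rightarrow> ('a \<Rightarrow> 'v::{real_normed_vector, second_countable_topology}) \<Rightarrow> bool" where
  "finite_second_moment M V \<longleftrightarrow>
     V \<in> borel_measurable M \<and> (\<integral>\<^sup>+\<omega>. ennreal ((norm (V \<omega>))\<^sup>2) \<partial>M) < \<infinity>"

lemma norm_add_power2_le: "(norm (u + v))\<^sup>2 \<le> 2 * (norm u)\<^sup>2 + 2 * (norm (v::'v::real_normed_vector))\<^sup>2"
proof -
  have "(norm (u + v))\<^sup>2 \<le> (norm u + norm v)\<^sup>2" by (intro power_mono norm_triangle_ineq) simp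
  also have "\<dots> \<le> 2 * (norm u)\<^sup>2 + 2 * (norm v)\<^sup>2"
    using zero_le_power2[of "norm u - norm v"] unfolding power2_sum power2_diff by linarith
  finally show ?thesis .
qed

lemma finite_second_moment_bound:
  assumes V: "finite_second_moment M V" and W: "W \<in> borel_measurable M"
    and le: "\<And>\<omega>. (norm (W \<omega>))\<^sup>2 \<le> c * (norm (V \<omega>))\<^sup>2" and "c \<ge> 0"
  shows "finite_second_moment M W"
proof -
  have "V \<in> borel_measurable M" using V by (simp add: finite_second_moment_def)
  then have V2: "(\<lambda>\<omega>. ennreal ((norm (V \<omega>))\<^sup>2)) \<in> borel_measurable M" by measurable
  have "(\<integral>\<^sup>+\<omega>. ennreal ((norm (W \<omega>))\<^sup>2) \<partial>M) \<le> (\<integral>\<^sup>+\<omega>. ennreal c * ennreal ((norm (V \<omega>))\<^sup>2) \<partial>M)"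
    using le \<open>c \<ge> 0\<close> by (intro nn_integral_mono) (simp add: ennreal_mult[symmetric] ennreal_leI)
  also have "\<dots> = ennreal c * (\<integral>\<^sup>+\<omega>. ennreal ((norm (V \<omega>))\<^sup>2) \<partial>M)"
    using V2 by (rule nn_integral_cmult)
  also have "\<dots> < \<infinity>" using V by (simp add: finite_second_moment_def ennreal_mult_less_top)
  finally show ?thesis using W by (simp add: finite_second_moment_def)
qed

lemma finite_second_moment_add:
  assumes U: "finite_second_moment M U" and V: "finite_second_moment M V"
  shows "finite_second_moment M (\<lambda>\<omega>. U \<omega> + V \<omega>)"
proof -
  have meas: "U \<in> borel_measurable M" "V \<in> borel_measurable M"
    using U V by (simp_all add: finite_second_moment_def)
  then have meas2: "(\<lambda>\<omega>. ennreal ((norm (U \<omega>))\<^sup>2)) \<in> borel_measurable M"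
    "(\<lambda>\<omega>. ennreal ((norm (V \<omega>))\<^sup>2)) \<in> borel_measurable M" by measurable
  have pointwise: "ennreal ((norm (U \<omega> + V \<omega>))\<^sup>2) \<le> 2 * ennreal ((norm (U \<omega>))\<^sup>2) + 2 * ennreal ((norm (V \<omega>))\<^sup>2)"
    for \<omega>
  proof -
    have "ennreal ((norm (U \<omega> + V \<omega>))\<^sup>2) \<le> ennreal (2 * (norm (U \<omega>))\<^sup>2 + 2 * (norm (V \<omega>))\<^sup>2)"
      by (rule ennreal_leI) (rule norm_add_power2_le)
    then show ?thesis by (simp add: ennreal_plus ennreal_mult)
  qed
  have "(\<integral>\<^sup>+\<omega>. ennreal ((norm (U \<omega> + V \<omega>))\<^sup>2) \<partial>M)
      \<le> (\<integral>\<^sup>+\<omega>. 2 * ennreal ((norm (U \<omega>))\<^sup>2) + 2 * ennreal ((norm (V \<omega>))\<^sup>2) \<partial>M)"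
    by (intro nn_integral_mono pointwise)
  also have "\<dots> = 2 * (\<integral>\<^sup>+\<omega>. ennreal ((norm (U \<omega>))\<^sup>2) \<partial>M) + 2 * (\<integral>\<^sup>+\<omega>. ennreal ((norm (V \<omega>))\<^sup>2) \<partial>M)"
    using meas2 by (simp add: nn_integral_add nn_integral_cmult)
  also have "\<dots> < \<infinity>" using U V by (simp add: finite_second_moment_def ennreal_mult_less_top)
  finally show ?thesis using meas by (simp add: finite_second_moment_def)
qed

lemma finite_second_moment_scaleR: "finite_second_moment M V \<Longrightarrow> finite_second_moment M (\<lambda>\<omega>. c *\<^sub>R V \<omega>)"
  by (rule finite_second_moment_bound[where c = "c\<^sup>2"])
    (auto simp: finite_second_moment_def power_mult_distrib)

lemma finite_second_moment_diff:
  "finite_second_moment M U \<Longrightarrow> finite_second_moment M V \<Longrightarrow> finite_second_moment M (\<lambda>\<omega>. U \<omega> - V \<omega>)"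
  using finite_second_moment_add[of M U "\<lambda>\<omega>. (-1) *\<^sub>R V \<omega>"] finite_second_moment_scaleR[of M V "-1"]
  by simp

lemma finite_second_moment_sum:
  "finite S \<Longrightarrow> (\<And>m. m \<in> S \<Longrightarrow> finite_second_moment M (V m)) \<Longrightarrow>
    finite_second_moment M (\<lambda>\<omega>. \<Sum>m\<in>S. V m \<omega>)"
proof (induction S rule: finite_induct)
  case empty
  then show ?case by (simp add: finite_second_moment_def)
next
  case (insert m S)
  then show ?case by (simp add: finite_second_moment_add)
qed

lemma finite_second_moment_const: "prob_space M \<Longrightarrow> finite_second_moment M (\<lambda>\<omega>. c)"
  by (simp add: finite_second_moment_def prob_space.emeasure_space_1 ennreal_mult_less_top)

lemma finite_second_moment_linear:
  fixes f :: "'v::euclidean_space \<Rightarrow> 'w::euclidean_space"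
  assumes f: "linear f" and V: "finite_second_moment M V"
  shows "finite_second_moment M (\<lambda>\<omega>. f (V \<omega>))"
proof -
  have bl: "bounded_linear f" using f by (simp add: linear_conv_bounded_linear)
  then obtain B where B: "B > 0" "\<And>x. norm (f x) \<le> norm x * B" using bounded_linear.pos_bounded by blast
  show ?thesis
  proof (rule finite_second_moment_bound[OF V, where c = "B\<^sup>2"])
    show "(\<lambda>\<omega>. f (V \<omega>)) \<in> borel_measurable M"
      using V by (intro borel_measurable_continuous_on[OF linear_continuous_on[OF bl]])
        (simp add: finite_second_moment_def)
    have "(norm (f (V \<omega>)))\<^sup>2 \<le> (norm (V \<omega>) * B)\<^sup>2" for \<omega> by (intro power_mono B) simp
    then show "(norm (f (V \<omega>)))\<^sup>2 \<le> B\<^sup>2 * (norm (V \<omega>))\<^sup>2" for \<omega> by (simp add: power_mult_distrib mult.commute)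
  qed simp
qed

lemma finite_second_moment_integrable:
  "finite_second_moment M V \<Longrightarrow> integrable M (\<lambda>\<omega>. (norm (V \<omega>))\<^sup>2)"
  unfolding finite_second_moment_def
  by (intro integrableI_bounded) (auto simp: borel_measurable_power)

lemma ennreal_integral_le_nn_integral:
  assumes "f \<in> borel_measurable M" "\<And>\<omega>. f \<omega> \<ge> 0"
  shows "ennreal (integral\<^sup>L M f) \<le> (\<integral>\<^sup>+\<omega>. ennreal (f \<omega>) \<partial>M)"
  using assms by (simp add: integral_eq_nn_integral ennreal_enn2real_if)

lemma ennreal_trade_le:
  assumes "I + ennreal q \<le> ennreal R" "R - q + r \<le> T" "q \<ge> 0" "r \<ge> 0" "R \<ge> 0"
  shows "I + ennreal r \<le> ennreal T"
proof -
  obtain i where i: "I = ennreal i" "i \<ge> 0"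
    using assms(1) by (cases I) (auto simp: top_unique)
  then have "i + q \<le> R" using assms by (simp flip: ennreal_plus)
  then have "ennreal (i + r) \<le> ennreal T" using assms(2) by (intro ennreal_leI) linarith
  then show ?thesis using i assms(4) by simp
qed

section \<open>Averaging over the network\<close>

definition unit_column_sums :: "real^'n^'n \<Rightarrow> bool" where
  "unit_column_sums A \<longleftrightarrow> (\<forall>j. (\<Sum>i\<in>UNIV. A $ i $ j) = 1)"

lemma column_sum_matrix_mult:
  "(\<Sum>i\<in>UNIV. (A ** B) $ i $ j) = (\<Sum>l\<in>UNIV. (\<Sum>i\<in>UNIV. A $ i $ l) * B $ l $ j)"
  by (simp add: matrix_matrix_mult_def sum_distrib_right) (rule sum.swap)

lemma unit_column_sums_mult: "unit_column_sums A \<Longrightarrow> unit_column_sums B \<Longrightarrow> unit_column_sums (A ** B)"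
  by (simp add: unit_column_sums_def column_sum_matrix_mult)

lemma unit_column_sums_mat1: "unit_column_sums (mat 1 :: real^'n^'n)"
  by (simp add: unit_column_sums_def mat_def)

lemma unit_column_sums_affine_comb:
  "unit_column_sums A \<Longrightarrow> unit_column_sums B \<Longrightarrow> unit_column_sums ((1 + e) *\<^sub>R A - e *\<^sub>R B)"
  unfolding unit_column_sums_def by (simp add: sum_subtractf sum.distrib algebra_simps flip: sum_distrib_left)

lemma unit_column_sums_matpow: "unit_column_sums W \<Longrightarrow> unit_column_sums (matpow W a)"
  by (induction a) (auto simp: matpow_def unit_column_sums_mat1 unit_column_sums_mult)

lemma unit_column_sums_accM: "unit_column_sums W \<Longrightarrow> unit_column_sums (accM W s)"
proof (induction W s rule: accM.induct)
  case (2 W)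
  then show ?case by (simp add: unit_column_sums_mat1 unit_column_sums_affine_comb unit_column_sums_mult)
next
  case (3 W s)
  then show ?case by (simp add: unit_column_sums_affine_comb unit_column_sums_mult)
qed (simp add: unit_column_sums_mat1)

lemma doubly_stochastic_imp_unit_column_sums: "doubly_stochastic W \<Longrightarrow> unit_column_sums W"
  by (simp add: doubly_stochastic_def unit_column_sums_def)

lemma xbar_matrix_mult:
  fixes Z :: "real^'p::finite^'n::finite"
  assumes "unit_column_sums A"
  shows "xbar (A ** Z) = xbar Z"
proof -
  have "(\<Sum>i\<in>UNIV. (A ** Z) $ i $ c) = (\<Sum>i\<in>UNIV. Z $ i $ c)" for c
    using assms by (simp add: column_sum_matrix_mult unit_column_sums_def)
  then show ?thesis by (simp add: xbar_def vec_eq_iff)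
qed

lemma xbar_add: "xbar (X + Y) = xbar X + xbar Y"
  by (simp add: xbar_def sum.distrib scaleR_add_right)

lemma xbar_diff: "xbar (X - Y) = xbar X - xbar Y"
  by (simp add: xbar_def sum_subtractf scaleR_diff_right)

lemma xbar_scaleR: "xbar (c *\<^sub>R X) = c *\<^sub>R xbar X"
  by (simp add: xbar_def scaleR_sum_right)

lemma xbar_sum: "xbar (\<Sum>j\<in>A. X j) = (\<Sum>j\<in>A. xbar (X j))"
proof -
  have "xbar 0 = 0" by (simp add: xbar_def)
  then show ?thesis by (induction A rule: infinite_finite_induct) (simp_all add: xbar_add)
qed

lemma linear_xtilde: "linear (xtilde :: real^'p::finite^'n::finite \<Rightarrow> _)"
  by (rule linearI) (simp_all add: xtilde_def xbar_add xbar_scaleR vec_eq_iff algebra_simps)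

lemma borel_measurable_xbar [measurable (raw)]:
  fixes f :: "'a \<Rightarrow> real^'p::finite^'n::finite"
  assumes "f \<in> borel_measurable N"
  shows "(\<lambda>\<omega>. xbar (f \<omega>)) \<in> borel_measurable N"
  unfolding xbar_def using assms by measurable

lemma borel_measurable_xtilde [measurable (raw)]:
  fixes f :: "'a \<Rightarrow> real^'p::finite^'n::finite"
  assumes "f \<in> borel_measurable N"
  shows "(\<lambda>\<omega>. xtilde (f \<omega>)) \<in> borel_measurable N"
  unfolding xtilde_def
  by (intro borel_measurable_vec_lambda borel_measurable_diff borel_measurable_vec_nth borel_measurable_xbar assms)

definition node_grad_mean :: "('n::finite \<Rightarrow> real^'p \<Rightarrow> real^'p) \<Rightarrow> real^'p^'n \<Rightarrow> real^'p" where
  "node_grad_mean gfi X = (1 / real CARD('n)) *\<^sub>R (\<Sum>i\<in>UNIV. gfi i (X $ i))"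

lemma favg_has_derivative:
  fixes fi :: "'n::finite \<Rightarrow> real^'p::finite \<Rightarrow> real"
  assumes "\<And>i v. (fi i has_derivative (\<lambda>h. gfi i v \<bullet> h)) (at v)"
  shows "(favg fi has_derivative (\<lambda>h. gavg gfi v \<bullet> h)) (at v)"
proof -
  have "((\<lambda>x. (1 / real CARD('n)) * (\<Sum>i\<in>UNIV. fi i x)) has_derivative
        (\<lambda>h. (1 / real CARD('n)) * (\<Sum>i\<in>UNIV. gfi i v \<bullet> h))) (at v)"
    by (intro has_derivative_mult_right has_derivative_sum assms)
  then show ?thesis by (simp add: favg_def[abs_def] gavg_def inner_sum_left)
qed

lemma gavg_lipschitz:
  fixes gfi :: "'n::finite \<Rightarrow> real^'p::finite \<Rightarrow> real^'p"
  assumes "\<And>i u v. norm (gfi i u - gfi i v) \<le> L * norm (u - v)"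
  shows "norm (gavg gfi u - gavg gfi v) \<le> L * norm (u - v)"
proof -
  have "norm (\<Sum>i\<in>UNIV. gfi i u - gfi i v) \<le> (\<Sum>i\<in>(UNIV::'n set). L * norm (u - v))"
    by (rule sum_norm_le) (rule assms)
  then show ?thesis
    by (simp add: gavg_def sum_subtractf flip: scaleR_diff_right) (simp add: divide_le_eq mult.commute)
qed

lemma norm_gavg_xbar_minus_node_grad_mean:
  fixes gfi :: "'n::finite \<Rightarrow> real^'p::finite \<Rightarrow> real^'p"
  assumes "\<And>i u v. norm (gfi i u - gfi i v) \<le> L * norm (u - v)"
  shows "(norm (gavg gfi (xbar X) - node_grad_mean gfi X))\<^sup>2 \<le> L\<^sup>2 / real CARD('n) * (norm (xtilde X))\<^sup>2"
proof -
  define n where "n = real CARD('n)"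
  have n: "n > 0" by (simp add: n_def)
  have "norm (gavg gfi (xbar X) - node_grad_mean gfi X) = (1 / n) * norm (\<Sum>i\<in>UNIV. gfi i (xbar X) - gfi i (X $ i))"
    by (simp add: gavg_def node_grad_mean_def n_def sum_subtractf flip: scaleR_diff_right)
  also have "\<dots> \<le> (1 / n) * (\<Sum>i\<in>UNIV. L * norm (X $ i - xbar X))"
    using n by (intro mult_left_mono sum_norm_le) (simp_all add: assms norm_minus_commute)
  finally have "(norm (gavg gfi (xbar X) - node_grad_mean gfi X))\<^sup>2 \<le> ((1 / n) * (\<Sum>i\<in>UNIV. L * norm (X $ i - xbar X)))\<^sup>2"
    by (rule power_mono) simp
  also have "\<dots> = (1 / n)\<^sup>2 * (\<Sum>i\<in>UNIV. L * norm (X $ i - xbar X))\<^sup>2"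
    by (rule power_mult_distrib)
  also have "\<dots> \<le> (1 / n)\<^sup>2 * ((\<Sum>i\<in>UNIV. (L * norm (X $ i - xbar X))\<^sup>2) * n)"
    using sum_squared_le_sum_of_squares[of "\<lambda>i. L * norm (X $ i - xbar X)" UNIV]
    by (intro mult_left_mono) (auto simp: n_def)
  also have "\<dots> = L\<^sup>2 / n * (\<Sum>i\<in>UNIV. (norm (X $ i - xbar X))\<^sup>2)"
    using n by (simp add: power_mult_distrib sum_distrib_left power2_eq_square field_simps)
  also have "(\<Sum>i\<in>UNIV. (norm (X $ i - xbar X))\<^sup>2) = (norm (xtilde X))\<^sup>2"
    by (simp add: norm_vec_power2 xtilde_def)
  finally show ?thesis by (simp add: n_def)
qed

section \<open>Descent inequalities\<close>

lemma descent_lemma: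
  fixes F :: "'v::real_inner \<Rightarrow> real"
  assumes deriv: "\<And>v. (F has_derivative (\<lambda>h. G v \<bullet> h)) (at v)"
    and lip: "\<And>u v. norm (G u - G v) \<le> L * norm (u - v)"
  shows "F (u + e) \<le> F u + G u \<bullet> e + L/2 * (norm e)\<^sup>2"
proof -
  define \<phi> where "\<phi> t = F (u + t *\<^sub>R e) - t * (G u \<bullet> e) - L/2 * t\<^sup>2 * (norm e)\<^sup>2" for t
  have \<phi>_deriv: "(\<phi> has_real_derivative (G (u + t *\<^sub>R e) \<bullet> e - G u \<bullet> e - L * t * (norm e)\<^sup>2)) (at t)" for t
  proof -
    have "((\<lambda>t. u + t *\<^sub>R e) has_derivative (\<lambda>h. h *\<^sub>R e)) (at t)"
      by (auto intro!: derivative_eq_intros)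
    from has_derivative_compose[OF this deriv]
    have "((\<lambda>t. F (u + t *\<^sub>R e)) has_real_derivative (G (u + t *\<^sub>R e) \<bullet> e)) (at t)"
      by (simp add: has_field_derivative_def mult_commute_abs)
    then show ?thesis unfolding \<phi>_def
      by (auto intro!: derivative_eq_intros simp: power2_eq_square)
  qed
  have "\<phi> 1 \<le> \<phi> 0"
  proof (rule DERIV_nonpos_imp_nonincreasing[of 0 1 \<phi>])
    fix t :: real assume t: "0 \<le> t" "t \<le> 1"
    have "G (u + t *\<^sub>R e) \<bullet> e - G u \<bullet> e \<le> norm (G (u + t *\<^sub>R e) - G u) * norm e"
      by (metis inner_diff_left norm_cauchy_schwarz)
    also have "\<dots> \<le> L * t * (norm e)\<^sup>2"
      using mult_right_mono[OF lip[of "u + t *\<^sub>R e" u] norm_ge_zero[of e]] t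
      by (simp add: power2_eq_square mult_ac)
    finally show "\<exists>y. DERIV \<phi> t :> y \<and> y \<le> 0"
      using \<phi>_deriv[of t] by (intro exI conjI) auto
  qed simp
  then show ?thesis by (simp add: \<phi>_def)
qed

lemma descent_lemma_completed_square:
  fixes F :: "'v::real_inner \<Rightarrow> real"
  assumes deriv: "\<And>v. (F has_derivative (\<lambda>h. G v \<bullet> h)) (at v)"
    and lip: "\<And>u v. norm (G u - G v) \<le> L * norm (u - v)" and "L > 0" "\<gamma> > 0"
  shows "F (u - \<gamma> *\<^sub>R S) + (norm (G u))\<^sup>2 / (2 * L) \<le> F u + L * \<gamma>\<^sup>2 / 2 * (norm (S - (1 / (L * \<gamma>)) *\<^sub>R G u))\<^sup>2"
proof -
  have "F (u + (- \<gamma> *\<^sub>R S)) \<le> F u + G u \<bullet> (- \<gamma> *\<^sub>R S) + L/2 * (norm (- \<gamma> *\<^sub>R S))\<^sup>2"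
    by (rule descent_lemma[OF deriv lip])
  moreover have "L * \<gamma>\<^sup>2 / 2 * (norm (S - (1 / (L * \<gamma>)) *\<^sub>R G u))\<^sup>2
      = L/2 * (norm (- \<gamma> *\<^sub>R S))\<^sup>2 + G u \<bullet> (- \<gamma> *\<^sub>R S) + (norm (G u))\<^sup>2 / (2 * L)"
    using \<open>L > 0\<close> \<open>\<gamma> > 0\<close> unfolding power2_norm_eq_inner
    by (simp add: inner_diff_left inner_diff_right inner_commute field_simps power2_eq_square)
  ultimately show ?thesis by (simp add: algebra_simps)
qed

lemma completed_square_le_norm_diff:
  fixes a h :: "'v::real_inner"
  assumes "L > 0" "\<gamma> > 0" "b \<ge> 0" "\<gamma> * b * L \<le> 1"
  shows "L * \<gamma>\<^sup>2 / 2 * (norm (b *\<^sub>R h - (1 / (L * \<gamma>)) *\<^sub>R a))\<^sup>2 - (norm a)\<^sup>2 / (2 * L) + \<gamma> * b / 2 * (norm a)\<^sup>2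
         \<le> \<gamma> * b / 2 * (norm (a - h))\<^sup>2"
proof -
  have "L * \<gamma>\<^sup>2 / 2 * (norm (b *\<^sub>R h - (1 / (L * \<gamma>)) *\<^sub>R a))\<^sup>2 - (norm a)\<^sup>2 / (2 * L) + \<gamma> * b / 2 * (norm a)\<^sup>2
      = \<gamma> * b / 2 * (norm (a - h))\<^sup>2 - \<gamma> * b / 2 * (1 - \<gamma> * b * L) * (norm h)\<^sup>2"
    using assms(1,2) unfolding power2_norm_eq_inner
    by (simp add: inner_diff_left inner_diff_right inner_commute field_simps power2_eq_square)
  also have "\<dots> \<le> \<gamma> * b / 2 * (norm (a - h))\<^sup>2"
    using assms(2-4) by simp
  finally show ?thesis .
qed

section \<open>The FlexGT recursion\<close>

locale flexgt =
  fixes M :: "'a measure"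
    and D :: "'n::finite \<Rightarrow> 's measure"
    and \<xi> :: "nat \<Rightarrow> 'n \<Rightarrow> 'a \<Rightarrow> 's"
    and fi :: "'n \<Rightarrow> real^'p::finite \<Rightarrow> real"
    and gfi :: "'n \<Rightarrow> real^'p \<Rightarrow> real^'p"
    and g :: "'n \<Rightarrow> real^'p \<Rightarrow> 's \<Rightarrow> real^'p"
    and Wbar :: "real^'n^'n"
    and x y :: "nat \<Rightarrow> 'a \<Rightarrow> real^'p^'n"
    and x0 :: "real^'p^'n"
    and L \<sigma> \<gamma> :: real
    and \<beta> :: nat
  assumes M: "prob_space M"
    and \<xi>_meas: "\<And>t i. \<xi> t i \<in> measurable M (D i)"
    and \<xi>_distr: "\<And>t i. distr M (D i) (\<xi> t i) = D i"
    and \<xi>_indep: "prob_space.indep_vars M (\<lambda>(t,i). D i) (\<lambda>(t,i). \<xi> t i) UNIV"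
    and g_meas: "\<And>i. (\<lambda>(v,s). g i v s) \<in> borel_measurable (borel \<Otimes>\<^sub>M D i)"
    and g_unbiased: "\<And>i v. integrable (D i) (g i v) \<and> (\<integral>s. g i v s \<partial>D i) = gfi i v"
    and g_var: "\<And>i v. (\<integral>\<^sup>+ s. ennreal ((norm (g i v s - gfi i v))\<^sup>2) \<partial>D i) \<le> ennreal (\<sigma>\<^sup>2)"
    and f_grad: "\<And>i v. (fi i has_derivative (\<lambda>h. gfi i v \<bullet> h)) (at v)"
    and f_lip: "\<And>i u v. norm (gfi i u - gfi i v) \<le> L * norm (u - v)"
    and f_bdd: "bdd_below (range (favg fi))"
    and Wbar: "unit_column_sums Wbar"
    and \<beta>: "\<beta> \<ge> 1" and \<gamma>_pos: "\<gamma> > 0" and L_pos: "L > 0"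
    and stepsize: "\<gamma> * real \<beta> * L \<le> 1"
    and x_init: "\<And>\<omega>. x 0 \<omega> = x0"
    and y_init: "\<And>\<omega>. y 0 \<omega> = stoch_grad g \<xi> x \<beta> 0 \<omega>"
    and y_inner: "\<And>k j \<omega>. j + 2 \<le> \<beta> \<Longrightarrow>
         y (\<beta> * k + j + 1) \<omega> = y (\<beta> * k + j) \<omega>
            + stoch_grad g \<xi> x \<beta> (\<beta> * k + j + 1) \<omega> - stoch_grad g \<xi> x \<beta> (\<beta> * k + j) \<omega>"
    and x_round: "\<And>k \<omega>. x (\<beta> * (k + 1)) \<omega> =
         Wbar ** (x (\<beta> * k) \<omega> - \<gamma> *\<^sub>R (\<Sum>j<\<beta>. y (\<beta> * k + j) \<omega>))"
    and y_round: "\<And>k \<omega>. y (\<beta> * (k + 1)) \<omega> =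
         Wbar ** (y (\<beta> * k) \<omega> + stoch_grad g \<xi> x \<beta> (\<beta> * (k + 1)) \<omega>
                   - stoch_grad g \<xi> x \<beta> (\<beta> * k) \<omega>)"
begin

sublocale prob_space M by (rule M)

abbreviation G :: "nat \<Rightarrow> 'a \<Rightarrow> real^'p^'n" where
  "G \<equiv> stoch_grad g \<xi> x \<beta>"

lemma stoch_grad_in_round:
  "j < \<beta> \<Longrightarrow> G (\<beta> * k + j) \<omega> = (\<chi> i. g i (x (\<beta> * k) \<omega> $ i) (\<xi> (\<beta> * k + j) i \<omega>))"
  by (simp add: stoch_grad_def)

lemma y_in_round: "j < \<beta> \<Longrightarrow> y (\<beta> * k + j) \<omega> = y (\<beta> * k) \<omega> + G (\<beta> * k + j) \<omega> - G (\<beta> * k) \<omega>"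
proof (induction j)
  case (Suc j)
  then show ?case using y_inner[of j k \<omega>] by simp
qed simp

lemma xbar_y_round_start: "xbar (y (\<beta> * k) \<omega>) = xbar (G (\<beta> * k) \<omega>)"
proof (induction k)
  case 0
  then show ?case using y_init[of \<omega>] by simp
next
  case (Suc k)
  have "xbar (y (\<beta> * (k + 1)) \<omega>) = xbar (y (\<beta> * k) \<omega>) + xbar (G (\<beta> * (k + 1)) \<omega>) - xbar (G (\<beta> * k) \<omega>)"
    by (simp only: y_round xbar_matrix_mult[OF Wbar] xbar_add xbar_diff)
  with Suc show ?case by simp
qed

lemma x_round_snapshot:
  "x (\<beta> * (k + 1)) \<omega> = Wbar ** (x (\<beta> * k) \<omega> - \<gamma> *\<^sub>R (\<Sum>j<\<beta>. y (\<beta> * k) \<omega> + G (\<beta> * k + j) \<omega> - G (\<beta> * k) \<omega>))"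
  using x_round[of k \<omega>] by (simp add: y_in_round)

lemma xbar_x_round:
  "xbar (x (\<beta> * (k + 1)) \<omega>) = xbar (x (\<beta> * k) \<omega>) - \<gamma> *\<^sub>R (\<Sum>j<\<beta>. xbar (G (\<beta> * k + j) \<omega>))"
proof -
  have "xbar (y (\<beta> * k + j) \<omega>) = xbar (G (\<beta> * k + j) \<omega>)" if "j < \<beta>" for j
    using y_in_round[OF that, of k \<omega>] xbar_y_round_start[of k \<omega>] by (simp add: xbar_add xbar_diff)
  then have "(\<Sum>j<\<beta>. xbar (y (\<beta> * k + j) \<omega>)) = (\<Sum>j<\<beta>. xbar (G (\<beta> * k + j) \<omega>))"
    by simp
  then show ?thesis by (simp only: x_round xbar_matrix_mult[OF Wbar] xbar_diff xbar_scaleR xbar_sum)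
qed

definition sample :: "nat \<times> 'n \<Rightarrow> 'a \<Rightarrow> 's" where
  "sample = (\<lambda>(t, i). \<xi> t i)"

definition sample_law :: "nat \<times> 'n \<Rightarrow> 's measure" where
  "sample_law = (\<lambda>(t, i). D i)"

definition history :: "nat \<Rightarrow> 'a \<Rightarrow> nat \<times> 'n \<Rightarrow> 's" where
  "history m \<omega> = restrict (\<lambda>ti. sample ti \<omega>) ({..<m} \<times> UNIV)"

definition past :: "nat \<Rightarrow> 'a measure" where
  "past m = vimage_algebra (space M) (history m) (PiM ({..<m} \<times> UNIV) sample_law)"

lemma measurable_sample: "sample ti \<in> measurable M (sample_law ti)"
  by (cases ti) (simp add: sample_def sample_law_def \<xi>_meas)

lemma indep_vars_sample: "indep_vars sample_law sample UNIV"
  using \<xi>_indep by (simp add: sample_def sample_law_def)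

lemma measurable_history: "history m \<in> measurable M (PiM ({..<m} \<times> UNIV) sample_law)"
  unfolding history_def by (rule measurable_restrict) (rule measurable_sample)

lemma space_past [simp]: "space (past m) = space M"
  by (simp add: past_def)

lemma measurable_past_imp_measurable: "f \<in> measurable (past m) N \<Longrightarrow> f \<in> measurable M N"
  using measurable_comp[of "\<lambda>\<omega>. \<omega>" M "past m" f N] measurable_history
  by (simp add: past_def comp_def measurable_vimage_algebra2)

lemma measurable_history_past: "history m \<in> measurable (past m) (PiM ({..<m} \<times> UNIV) sample_law)"
  unfolding past_def
  by (rule measurable_vimage_algebra1) (use measurable_history in \<open>auto dest: measurable_space\<close>)

lemma measurable_past_mono:
  assumes f: "f \<in> measurable (past m) N" and "m \<le> m'"
  shows "f \<in> measurable (past m') N"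
proof -
  have sub: "{..<m} \<times> UNIV \<subseteq> {..<m'} \<times> (UNIV :: 'n set)" using \<open>m \<le> m'\<close> by auto
  have "(\<lambda>\<omega>. restrict (history m' \<omega>) ({..<m} \<times> UNIV)) \<in> measurable (past m') (PiM ({..<m} \<times> UNIV) sample_law)"
    by (rule measurable_compose[OF measurable_history_past measurable_restrict_subset[OF sub]])
  moreover have "restrict (history m' \<omega>) ({..<m} \<times> UNIV) = history m \<omega>" for \<omega>
    using sub by (auto simp: history_def restrict_def fun_eq_iff)
  ultimately have "(\<lambda>\<omega>. \<omega>) \<in> measurable (past m') (past m)"
    unfolding past_def[of m] by (intro measurable_vimage_algebra2) auto
  then show ?thesis using measurable_comp[OF _ f] by (simp add: comp_def)
qed

lemma measurable_\<xi>_past: "t < m \<Longrightarrow> \<xi> t i \<in> measurable (past m) (D i)"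
proof -
  assume "t < m"
  then have ti: "(t, i) \<in> {..<m} \<times> UNIV" by simp
  have "(\<lambda>\<omega>. history m \<omega> (t, i)) \<in> measurable (past m) (sample_law (t, i))"
    by (rule measurable_compose[OF measurable_history_past measurable_component_singleton[OF ti]])
  moreover have "history m \<omega> (t, i) = \<xi> t i \<omega>" for \<omega> using ti by (simp add: history_def sample_def)
  ultimately show ?thesis by (simp add: sample_law_def)
qed

lemma measurable_g_comp:
  assumes "a \<in> borel_measurable N" "b \<in> measurable N (D i)"
  shows "(\<lambda>\<omega>. g i (a \<omega>) (b \<omega>)) \<in> borel_measurable N"
  using measurable_compose[OF measurable_Pair[OF assms] g_meas[of i]] by simp

lemma measurable_stoch_grad_past:
  assumes "x (\<beta> * k) \<in> borel_measurable (past m)" "j < \<beta>" "\<beta> * k + j < m"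
  shows "G (\<beta> * k + j) \<in> borel_measurable (past m)"
proof -
  have "(\<lambda>\<omega>. \<chi> i. g i (x (\<beta> * k) \<omega> $ i) (\<xi> (\<beta> * k + j) i \<omega>)) \<in> borel_measurable (past m)"
    by (intro borel_measurable_vec_lambda measurable_g_comp borel_measurable_vec_nth assms measurable_\<xi>_past)
  moreover have "G (\<beta> * k + j) = (\<lambda>\<omega>. \<chi> i. g i (x (\<beta> * k) \<omega> $ i) (\<xi> (\<beta> * k + j) i \<omega>))"
    using stoch_grad_in_round[OF assms(2)] by auto
  ultimately show ?thesis by simp
qed

lemma measurable_snapshot_past:
  "x (\<beta> * k) \<in> borel_measurable (past (\<beta> * k)) \<and> y (\<beta> * k) \<in> borel_measurable (past (\<beta> * k + 1))"
proof (induction k)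
  case 0
  have x0: "x (\<beta> * 0) \<in> borel_measurable (past m)" for m
    using x_init by (simp add: measurable_cong[of _ "x 0" "\<lambda>_. x0"])
  have "G (\<beta> * 0 + 0) \<in> borel_measurable (past 1)"
    using \<beta> by (intro measurable_stoch_grad_past x0) auto
  moreover have "y 0 = G 0" using y_init by auto
  ultimately show ?case using x0 by simp
next
  case (Suc k)
  define m where "m = \<beta> * (k + 1)"
  have xk: "x (\<beta> * k) \<in> borel_measurable (past m)" and yk: "y (\<beta> * k) \<in> borel_measurable (past m)"
    using Suc.IH \<beta> by (auto simp: m_def intro: measurable_past_mono)
  have Gk: "G (\<beta> * k + j) \<in> borel_measurable (past m)" if "j < \<beta>" for j
    using that by (intro measurable_stoch_grad_past[OF xk]) (auto simp: m_def)
  have Gk0: "G (\<beta> * k) \<in> borel_measurable (past m)" using Gk[of 0] \<beta> by simp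
  have "x (\<beta> * (k + 1)) = (\<lambda>\<omega>. Wbar ** (x (\<beta> * k) \<omega> - \<gamma> *\<^sub>R (\<Sum>j<\<beta>. y (\<beta> * k) \<omega> + G (\<beta> * k + j) \<omega> - G (\<beta> * k) \<omega>)))"
    by (rule ext) (rule x_round_snapshot)
  also have "\<dots> \<in> borel_measurable (past m)"
    using Gk by (intro borel_measurable_matrix_matrix_mult borel_measurable_diff borel_measurable_scaleR
        borel_measurable_sum borel_measurable_add xk yk Gk0 borel_measurable_const) auto
  finally have xk1: "x (\<beta> * (k + 1)) \<in> borel_measurable (past m)" .
  have "G (\<beta> * (k + 1) + 0) \<in> borel_measurable (past (m + 1))"
    using \<beta> by (intro measurable_stoch_grad_past measurable_past_mono[OF xk1]) (auto simp: m_def)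
  then have "(\<lambda>\<omega>. Wbar ** (y (\<beta> * k) \<omega> + G (\<beta> * (k + 1)) \<omega> - G (\<beta> * k) \<omega>)) \<in> borel_measurable (past (m + 1))"
    using yk Gk0 by (intro borel_measurable_matrix_matrix_mult borel_measurable_diff borel_measurable_add)
      (auto intro: measurable_past_mono)
  also have "(\<lambda>\<omega>. Wbar ** (y (\<beta> * k) \<omega> + G (\<beta> * (k + 1)) \<omega> - G (\<beta> * k) \<omega>)) = y (\<beta> * (k + 1))"
    by (rule ext) (rule y_round[symmetric])
  finally have "y (\<beta> * (k + 1)) \<in> borel_measurable (past (m + 1))" .
  with xk1 show ?case by (simp add: m_def)
qed

lemma measurable_snapshot: "x (\<beta> * k) \<in> borel_measurable M"
  using measurable_snapshot_past measurable_past_imp_measurable by blast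

definition block :: "nat \<Rightarrow> (nat \<times> 'n) set" where
  "block k = {\<beta> * k..<\<beta> * k + \<beta>} \<times> UNIV"

definition block_samples :: "nat \<Rightarrow> 'a \<Rightarrow> nat \<times> 'n \<Rightarrow> 's" where
  "block_samples k \<omega> = restrict (\<lambda>ti. sample ti \<omega>) (block k)"

lemma measurable_block_samples: "block_samples k \<in> measurable M (PiM (block k) sample_law)"
  unfolding block_samples_def by (rule measurable_restrict) (rule measurable_sample)

lemma block_samples_apply: "j < \<beta> \<Longrightarrow> block_samples k \<omega> (\<beta> * k + j, i) = \<xi> (\<beta> * k + j) i \<omega>"
  by (simp add: block_samples_def block_def sample_def)

lemma measurable_block_component:
  assumes "j < \<beta>"
  shows "(\<lambda>p. snd p (\<beta> * k + j, i)) \<in> measurable (N \<Otimes>\<^sub>M PiM (block k) sample_law) (D i)"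
proof -
  have "(\<beta> * k + j, i) \<in> block k" using assms by (simp add: block_def)
  then have "(\<lambda>p. snd p (\<beta> * k + j, i)) \<in> measurable (N \<Otimes>\<^sub>M PiM (block k) sample_law) (sample_law (\<beta> * k + j, i))"
    by (rule measurable_compose[OF measurable_snd measurable_component_singleton])
  then show ?thesis by (simp add: sample_law_def)
qed

text \<open>The snapshot is a function of the samples drawn before the round, and these are
  independent of the samples drawn during the round.\<close>
lemma indep_snapshot_block:
  "indep_set (sigma_sets (space M) {x (\<beta> * k) -` A \<inter> space M | A. A \<in> sets borel})
     (sigma_sets (space M) {block_samples k -` A \<inter> space M | A. A \<in> sets (PiM (block k) sample_law)})"
proof -
  let ?P = "PiM ({..<\<beta> * k} \<times> UNIV) sample_law" and ?B = "PiM (block k) sample_law"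
  have "({..<\<beta> * k} \<times> UNIV) \<inter> block k = {}" by (auto simp: block_def)
  from indep_var_restrict[OF indep_vars_sample this]
  have "indep_var ?P (history (\<beta> * k)) ?B (block_samples k)"
    by (simp add: history_def[abs_def] block_samples_def[abs_def])
  then have indep: "indep_set (sigma_sets (space M) {history (\<beta> * k) -` A \<inter> space M | A. A \<in> sets ?P})
      (sigma_sets (space M) {block_samples k -` A \<inter> space M | A. A \<in> sets ?B})"
    unfolding indep_var_eq by auto
  have "{x (\<beta> * k) -` A \<inter> space M | A. A \<in> sets borel} \<subseteq> sets (past (\<beta> * k))"
    using measurable_sets[OF conjunct1[OF measurable_snapshot_past]] by auto
  then have sub: "sigma_sets (space M) {x (\<beta> * k) -` A \<inter> space M | A. A \<in> sets borel}
      \<subseteq> sigma_sets (space M) {history (\<beta> * k) -` A \<inter> space M | A. A \<in> sets ?P}"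
    using sets.sigma_sets_subset[of _ "past (\<beta> * k)"] by (simp add: past_def sets_vimage_algebra)
  show ?thesis
    unfolding indep_set_def
    by (rule indep_sets_mono_sets[OF indep[unfolded indep_set_def]]) (use sub in \<open>auto split: bool.split\<close>)
qed

lemma nn_integral_round_iterated:
  assumes "F \<in> borel_measurable (borel \<Otimes>\<^sub>M PiM (block k) sample_law)"
  shows "(\<integral>\<^sup>+\<omega>. F (x (\<beta> * k) \<omega>, block_samples k \<omega>) \<partial>M)
    = (\<integral>\<^sup>+\<omega>. (\<integral>\<^sup>+\<omega>'. F (x (\<beta> * k) \<omega>, block_samples k \<omega>') \<partial>M) \<partial>M)"
  by (rule nn_integral_indep_set_iterated[OF measurable_snapshot measurable_block_samples indep_snapshot_block assms])

section \<open>Descent over one round\<close>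

definition gap :: "real^'p \<Rightarrow> real" where
  "gap v = favg fi v - fstar fi"

lemma gap_nonneg: "gap v \<ge> 0"
  using cINF_lower[OF f_bdd, of v] by (simp add: gap_def fstar_def)

lemma gap_descent:
  "gap (u - \<gamma> *\<^sub>R S) + (norm (gavg gfi u))\<^sup>2 / (2 * L)
     \<le> gap u + L * \<gamma>\<^sup>2 / 2 * (norm (S - (1 / (L * \<gamma>)) *\<^sub>R gavg gfi u))\<^sup>2"
  using descent_lemma_completed_square[OF favg_has_derivative[OF f_grad] gavg_lipschitz[OF f_lip] L_pos \<gamma>_pos]
  by (simp add: gap_def)

lemma borel_measurable_gap [measurable (raw)]:
  assumes "f \<in> borel_measurable N"
  shows "(\<lambda>\<omega>. gap (f \<omega>)) \<in> borel_measurable N"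
proof -
  have "continuous_on UNIV (favg fi)"
    by (intro continuous_at_imp_continuous_on ballI has_derivative_continuous[OF favg_has_derivative[OF f_grad]])
  then have "continuous_on UNIV gap"
    unfolding gap_def[abs_def] by (intro continuous_intros)
  then show ?thesis using assms by (rule borel_measurable_continuous_on)
qed

lemma borel_measurable_gavg [measurable (raw)]:
  assumes "f \<in> borel_measurable N"
  shows "(\<lambda>\<omega>. gavg gfi (f \<omega>)) \<in> borel_measurable N"
proof -
  have "lipschitz_on L UNIV (gavg gfi)"
    unfolding lipschitz_on_def using L_pos gavg_lipschitz[OF f_lip] by (auto simp: dist_norm)
  then show ?thesis using assms by (rule borel_measurable_continuous_on[OF lipschitz_on_continuous_on])
qed

definition round_direction :: "nat \<Rightarrow> real^'p^'n \<Rightarrow> (nat \<times> 'n \<Rightarrow> 's) \<Rightarrow> real^'p" where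
  "round_direction k X r = (\<Sum>j<\<beta>. (1 / real CARD('n)) *\<^sub>R (\<Sum>i\<in>UNIV. g i (X $ i) (r (\<beta> * k + j, i))))"

lemma xbar_x_next:
  "xbar (x (\<beta> * (k + 1)) \<omega>) = xbar (x (\<beta> * k) \<omega>) - \<gamma> *\<^sub>R round_direction k (x (\<beta> * k) \<omega>) (block_samples k \<omega>)"
proof -
  have "(\<Sum>j<\<beta>. xbar (G (\<beta> * k + j) \<omega>)) = round_direction k (x (\<beta> * k) \<omega>) (block_samples k \<omega>)"
    unfolding round_direction_def
    by (rule sum.cong) (auto simp: stoch_grad_in_round block_samples_apply xbar_def)
  then show ?thesis using xbar_x_round[of k \<omega>] by simp
qed

lemma measurable_round_direction:
  "(\<lambda>p. round_direction k (fst p) (snd p)) \<in> borel_measurable (borel \<Otimes>\<^sub>M PiM (block k) sample_law)"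
  unfolding round_direction_def
proof (intro borel_measurable_sum borel_measurable_scaleR borel_measurable_const measurable_g_comp)
  show "(\<lambda>p. (fst p :: real^'p^'n) $ i) \<in> borel_measurable (borel \<Otimes>\<^sub>M PiM (block k) sample_law)" for i
    by measurable
  show "(\<lambda>p. snd p (\<beta> * k + j, i)) \<in> measurable (borel \<Otimes>\<^sub>M PiM (block k) sample_law) (D i)"
    if "j \<in> {..<\<beta>}" for j i
    using that by (intro measurable_block_component) simp
qed

lemma measurable_g: "g i v \<in> borel_measurable (D i)"
  using measurable_g_comp[of "\<lambda>s. v" "D i" "\<lambda>s. s" i] by simp

lemma nn_integral_\<xi>:
  "f \<in> borel_measurable (D i) \<Longrightarrow> (\<integral>\<^sup>+\<omega>. f (\<xi> t i \<omega>) \<partial>M) = (\<integral>\<^sup>+s. f s \<partial>D i)"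
  using nn_integral_distr[OF \<xi>_meas[of t i], of f] by (simp add: \<xi>_distr)

lemma integrable_\<xi>:
  "f \<in> borel_measurable (D i) \<Longrightarrow> integrable M (\<lambda>\<omega>. f (\<xi> t i \<omega>)) \<longleftrightarrow> integrable (D i) f"
  for f :: "'s \<Rightarrow> 'b::{banach, second_countable_topology}"
  using integrable_distr_eq[OF \<xi>_meas[of t i], of f] by (simp add: \<xi>_distr)

lemma integral_\<xi>:
  "f \<in> borel_measurable (D i) \<Longrightarrow> (\<integral>\<omega>. f (\<xi> t i \<omega>) \<partial>M) = (\<integral>s. f s \<partial>D i)"
  for f :: "'s \<Rightarrow> 'b::{banach, second_countable_topology}"
  using integral_distr[OF \<xi>_meas[of t i], of f] by (simp add: \<xi>_distr)

lemma indep_var_sample_comp: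
  fixes fa fb :: "'s \<Rightarrow> 'b::topological_space"
  assumes "ta \<noteq> tb" and fa: "fa \<in> borel_measurable (sample_law ta)" and fb: "fb \<in> borel_measurable (sample_law tb)"
  shows "indep_var borel (\<lambda>\<omega>. fa (sample ta \<omega>)) borel (\<lambda>\<omega>. fb (sample tb \<omega>))"
proof -
  have "{ta} \<inter> {tb} = {}" using assms by auto
  from indep_var_restrict[OF indep_vars_sample this]
  have indep: "indep_var (PiM {ta} sample_law) (\<lambda>\<omega>. restrict (\<lambda>t. sample t \<omega>) {ta})
      (PiM {tb} sample_law) (\<lambda>\<omega>. restrict (\<lambda>t. sample t \<omega>) {tb})"
    by simp
  have fa': "(\<lambda>h. fa (h ta)) \<in> borel_measurable (PiM {ta} sample_law)"
    using measurable_compose[OF measurable_component_singleton[of ta "{ta}" sample_law] fa] by simp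
  have fb': "(\<lambda>h. fb (h tb)) \<in> borel_measurable (PiM {tb} sample_law)"
    using measurable_compose[OF measurable_component_singleton[of tb "{tb}" sample_law] fb] by simp
  from indep_var_compose[OF indep fa' fb'] show ?thesis by (simp add: comp_def)
qed

definition round_noise :: "nat \<Rightarrow> real^'p^'n \<Rightarrow> nat \<times> 'n \<Rightarrow> 'a \<Rightarrow> real^'p" where
  "round_noise k X = (\<lambda>(j, i) \<omega>. (1 / real CARD('n)) *\<^sub>R (g i (X $ i) (\<xi> (\<beta> * k + j) i \<omega>) - gfi i (X $ i)))"

lemma round_direction_eq_noise:
  "round_direction k X (block_samples k \<omega>)
    = real \<beta> *\<^sub>R node_grad_mean gfi X + (\<Sum>a\<in>{..<\<beta>} \<times> UNIV. round_noise k X a \<omega>)"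
proof -
  define n where "n = real CARD('n)"
  have "(\<Sum>a\<in>{..<\<beta>} \<times> UNIV. round_noise k X a \<omega>)
      = (\<Sum>j<\<beta>. \<Sum>i\<in>UNIV. (1 / n) *\<^sub>R (g i (X $ i) (\<xi> (\<beta> * k + j) i \<omega>) - gfi i (X $ i)))"
    unfolding sum.cartesian_product by (intro sum.cong) (auto simp: round_noise_def n_def)
  also have "\<dots> = (\<Sum>j<\<beta>. (1 / n) *\<^sub>R (\<Sum>i\<in>UNIV. g i (X $ i) (\<xi> (\<beta> * k + j) i \<omega>)) - node_grad_mean gfi X)"
    by (simp add: node_grad_mean_def n_def scaleR_sum_right[symmetric] sum_subtractf scaleR_diff_right)
  also have "\<dots> = round_direction k X (block_samples k \<omega>) - real \<beta> *\<^sub>R node_grad_mean gfi X"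
    by (simp add: round_direction_def block_samples_apply n_def sum_subtractf sum_constant_scaleR del: sum_constant)
  finally show ?thesis by simp
qed

lemma integrable_round_noise: "integrable M (round_noise k X a)"
  using g_unbiased integrable_\<xi>[OF measurable_g] by (cases a) (simp add: round_noise_def)

lemma expectation_round_noise: "expectation (round_noise k X a) = 0"
  using g_unbiased
  by (cases a) (simp add: round_noise_def integral_\<xi>[OF measurable_g] integrable_\<xi>[OF measurable_g] prob_space)

lemma nn_integral_norm_round_noise:
  "(\<integral>\<^sup>+\<omega>. ennreal ((norm (round_noise k X a \<omega>))\<^sup>2) \<partial>M) \<le> ennreal (\<sigma>\<^sup>2 / (real CARD('n))\<^sup>2)"
proof -
  obtain j i where a: "a = (j, i)" by (cases a)
  define n where "n = real CARD('n)"
  have "g i (X $ i) \<in> borel_measurable (D i)" by (rule measurable_g)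
  then have var_meas: "(\<lambda>s. ennreal ((norm (g i (X $ i) s - gfi i (X $ i)))\<^sup>2)) \<in> borel_measurable (D i)"
    by measurable
  have "(\<integral>\<^sup>+\<omega>. ennreal ((norm (round_noise k X a \<omega>))\<^sup>2) \<partial>M)
      = (\<integral>\<^sup>+\<omega>. ennreal (1 / n\<^sup>2) * ennreal ((norm (g i (X $ i) (\<xi> (\<beta> * k + j) i \<omega>) - gfi i (X $ i)))\<^sup>2) \<partial>M)"
    by (intro nn_integral_cong) (simp add: a round_noise_def n_def ennreal_mult[symmetric] power_mult_distrib power_divide)
  also have "\<dots> = ennreal (1 / n\<^sup>2) * (\<integral>\<^sup>+s. ennreal ((norm (g i (X $ i) s - gfi i (X $ i)))\<^sup>2) \<partial>D i)"
    using measurable_compose[OF \<xi>_meas var_meas] by (simp add: nn_integral_cmult nn_integral_\<xi>[OF var_meas])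
  also have "\<dots> \<le> ennreal (1 / n\<^sup>2) * ennreal (\<sigma>\<^sup>2)" by (intro mult_left_mono g_var) simp
  finally show ?thesis by (simp add: n_def ennreal_mult[symmetric])
qed

lemma indep_round_noise:
  assumes "a \<noteq> b"
  shows "indep_var borel (round_noise k X a) borel (round_noise k X b)"
proof -
  obtain j i j' i' where ab: "a = (j, i)" "b = (j', i')" by (cases a, cases b)
  define e where "e = (\<lambda>(j::nat, i::'n) s. (1 / real CARD('n)) *\<^sub>R (g i (X $ i) s - gfi i (X $ i)))"
  have "round_noise k X (j, i) = (\<lambda>\<omega>. e (j, i) (sample (\<beta> * k + j, i) \<omega>))" for j i
    by (simp add: round_noise_def e_def sample_def)
  moreover have "e (j, i) \<in> borel_measurable (sample_law (\<beta> * k + j, i))" for j i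
    using measurable_g[of i "X $ i"] by (simp add: e_def sample_law_def)
  moreover have "(\<beta> * k + j, i) \<noteq> (\<beta> * k + j', i')" using assms ab by auto
  ultimately show ?thesis unfolding ab by (simp add: indep_var_sample_comp)
qed

lemma round_direction_variance:
  fixes X :: "real^'p^'n"
  shows "(\<integral>\<^sup>+\<omega>. ennreal ((norm (round_direction k X (block_samples k \<omega>) - c))\<^sup>2) \<partial>M)
    \<le> ennreal ((norm (real \<beta> *\<^sub>R node_grad_mean gfi X - c))\<^sup>2 + real \<beta> * \<sigma>\<^sup>2 / real CARD('n))"
proof -
  let ?A = "{..<\<beta>} \<times> (UNIV :: 'n set)"
  have "(\<integral>\<^sup>+\<omega>. ennreal ((norm ((real \<beta> *\<^sub>R node_grad_mean gfi X - c) + (\<Sum>a\<in>?A. round_noise k X a \<omega>)))\<^sup>2) \<partial>M)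
      \<le> ennreal ((norm (real \<beta> *\<^sub>R node_grad_mean gfi X - c))\<^sup>2 + real (card ?A) * (\<sigma>\<^sup>2 / (real CARD('n))\<^sup>2))"
    by (rule nn_integral_norm_centered_sum_le)
      (simp_all add: integrable_round_noise expectation_round_noise nn_integral_norm_round_noise indep_round_noise)
  moreover have "real (card ?A) * (\<sigma>\<^sup>2 / (real CARD('n))\<^sup>2) = real \<beta> * \<sigma>\<^sup>2 / real CARD('n)"
    by (simp add: card_cartesian_product power2_eq_square)
  ultimately show ?thesis by (simp add: round_direction_eq_noise algebra_simps)
qed

lemma measurable_round_direction_at:
  "(\<lambda>\<omega>. round_direction k X (block_samples k \<omega>)) \<in> borel_measurable M"
proof -
  have "(\<lambda>\<omega>. (X, block_samples k \<omega>)) \<in> measurable M (borel \<Otimes>\<^sub>M PiM (block k) sample_law)"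
    by (intro measurable_Pair measurable_const measurable_block_samples) simp
  from measurable_compose[OF this measurable_round_direction] show ?thesis by simp
qed

text \<open>Integrating gap_descent, an inequality between nonnegative quantities, in ennreal avoids
  any integrability assumption on the objective.\<close>
lemma nn_integral_gap_round_le:
  fixes X :: "real^'p^'n"
  defines "a \<equiv> gavg gfi (xbar X)"
  shows "(\<integral>\<^sup>+\<omega>. ennreal (gap (xbar X - \<gamma> *\<^sub>R round_direction k X (block_samples k \<omega>))) \<partial>M)
      + ennreal ((norm a)\<^sup>2 / (2 * L))
    \<le> ennreal (gap (xbar X) + L * \<gamma>\<^sup>2 / 2 * ((norm (real \<beta> *\<^sub>R node_grad_mean gfi X - (1 / (L * \<gamma>)) *\<^sub>R a))\<^sup>2
      + real \<beta> * \<sigma>\<^sup>2 / real CARD('n)))"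
proof -
  define u where "u = xbar X"
  define c where "c = (1 / (L * \<gamma>)) *\<^sub>R a"
  define S where "S \<omega> = round_direction k X (block_samples k \<omega>)" for \<omega>
  define V where "V = (norm (real \<beta> *\<^sub>R node_grad_mean gfi X - c))\<^sup>2 + real \<beta> * \<sigma>\<^sup>2 / real CARD('n)"
  have V_nonneg: "V \<ge> 0" by (simp add: V_def)
  have S_meas: "S \<in> borel_measurable M"
    unfolding S_def[abs_def] by (rule measurable_round_direction_at)
  have pointwise: "ennreal (gap (u - \<gamma> *\<^sub>R S \<omega>)) + ennreal ((norm a)\<^sup>2 / (2 * L))
      \<le> ennreal (gap u) + ennreal (L * \<gamma>\<^sup>2 / 2) * ennreal ((norm (S \<omega> - c))\<^sup>2)" for \<omega>
  proof -
    have "ennreal (gap (u - \<gamma> *\<^sub>R S \<omega>) + (norm a)\<^sup>2 / (2 * L))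
        \<le> ennreal (gap u + L * \<gamma>\<^sup>2 / 2 * (norm (S \<omega> - c))\<^sup>2)"
      using gap_descent[of u "S \<omega>"] by (intro ennreal_leI) (simp add: a_def u_def c_def)
    then show ?thesis using gap_nonneg L_pos by (simp add: ennreal_mult[symmetric])
  qed
  have "(\<integral>\<^sup>+\<omega>. ennreal (gap (u - \<gamma> *\<^sub>R S \<omega>)) \<partial>M) + ennreal ((norm a)\<^sup>2 / (2 * L))
      = (\<integral>\<^sup>+\<omega>. ennreal (gap (u - \<gamma> *\<^sub>R S \<omega>)) + ennreal ((norm a)\<^sup>2 / (2 * L)) \<partial>M)"
    using S_meas by (simp add: nn_integral_add emeasure_space_1)
  also have "\<dots> \<le> (\<integral>\<^sup>+\<omega>. ennreal (gap u) + ennreal (L * \<gamma>\<^sup>2 / 2) * ennreal ((norm (S \<omega> - c))\<^sup>2) \<partial>M)"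
    by (intro nn_integral_mono pointwise)
  also have "\<dots> = ennreal (gap u) + ennreal (L * \<gamma>\<^sup>2 / 2) * (\<integral>\<^sup>+\<omega>. ennreal ((norm (S \<omega> - c))\<^sup>2) \<partial>M)"
    using S_meas by (simp add: nn_integral_add nn_integral_cmult emeasure_space_1)
  also have "\<dots> \<le> ennreal (gap u) + ennreal (L * \<gamma>\<^sup>2 / 2) * ennreal V"
    using round_direction_variance[of k X c] by (intro add_left_mono mult_left_mono) (simp_all add: S_def V_def)
  also have "\<dots> = ennreal (gap u + L * \<gamma>\<^sup>2 / 2 * V)"
    using gap_nonneg[of u] L_pos V_nonneg by (simp add: ennreal_mult[symmetric])
  finally show ?thesis by (simp add: u_def S_def V_def c_def)
qed

lemma round_descent:
  fixes X :: "real^'p^'n"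
  shows "(\<integral>\<^sup>+\<omega>. ennreal (gap (xbar X - \<gamma> *\<^sub>R round_direction k X (block_samples k \<omega>)))
      + ennreal (\<gamma> * \<beta> / 2 * (norm (gavg gfi (xbar X)))\<^sup>2) \<partial>M)
    \<le> ennreal (gap (xbar X)) + ennreal (\<gamma> * \<beta> * L\<^sup>2 / (2 * real CARD('n)) * (norm (xtilde X))\<^sup>2)
      + ennreal (L * \<gamma>\<^sup>2 * \<beta> * \<sigma>\<^sup>2 / (2 * real CARD('n)))"
proof -
  define n where "n = real CARD('n)"
  define a where "a = gavg gfi (xbar X)"
  define h where "h = node_grad_mean gfi X"
  have "L * \<gamma>\<^sup>2 / 2 * (norm (real \<beta> *\<^sub>R h - (1 / (L * \<gamma>)) *\<^sub>R a))\<^sup>2 - (norm a)\<^sup>2 / (2 * L) + \<gamma> * \<beta> / 2 * (norm a)\<^sup>2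
      \<le> \<gamma> * \<beta> / 2 * (norm (a - h))\<^sup>2"
    using completed_square_le_norm_diff[OF L_pos \<gamma>_pos _ stepsize] by simp
  also have "\<dots> \<le> \<gamma> * \<beta> / 2 * (L\<^sup>2 / n * (norm (xtilde X))\<^sup>2)"
    using norm_gavg_xbar_minus_node_grad_mean[OF f_lip, where X = X] \<gamma>_pos
    by (intro mult_left_mono) (simp_all add: a_def h_def n_def)
  finally have "gap (xbar X) + L * \<gamma>\<^sup>2 / 2 * ((norm (real \<beta> *\<^sub>R h - (1 / (L * \<gamma>)) *\<^sub>R a))\<^sup>2
        + real \<beta> * \<sigma>\<^sup>2 / n) - (norm a)\<^sup>2 / (2 * L) + \<gamma> * \<beta> / 2 * (norm a)\<^sup>2
      \<le> gap (xbar X) + \<gamma> * \<beta> * L\<^sup>2 / (2 * n) * (norm (xtilde X))\<^sup>2 + L * \<gamma>\<^sup>2 * \<beta> * \<sigma>\<^sup>2 / (2 * n)"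
    by (simp add: algebra_simps)
  from ennreal_trade_le[OF nn_integral_gap_round_le[where X = X and k = k, folded a_def h_def n_def] this]
  have "(\<integral>\<^sup>+\<omega>. ennreal (gap (xbar X - \<gamma> *\<^sub>R round_direction k X (block_samples k \<omega>))) \<partial>M)
      + ennreal (\<gamma> * \<beta> / 2 * (norm a)\<^sup>2)
    \<le> ennreal (gap (xbar X) + \<gamma> * \<beta> * L\<^sup>2 / (2 * n) * (norm (xtilde X))\<^sup>2 + L * \<gamma>\<^sup>2 * \<beta> * \<sigma>\<^sup>2 / (2 * n))"
    using gap_nonneg L_pos \<gamma>_pos by (simp add: n_def)
  moreover have "(\<lambda>\<omega>. gap (xbar X - \<gamma> *\<^sub>R round_direction k X (block_samples k \<omega>))) \<in> borel_measurable M"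
    using measurable_round_direction_at[of k X] by measurable
  ultimately show ?thesis
    using gap_nonneg L_pos \<gamma>_pos by (simp add: a_def n_def nn_integral_add emeasure_space_1)
qed

lemma round_inequality:
  "(\<integral>\<^sup>+\<omega>. ennreal (gap (xbar (x (\<beta> * Suc k) \<omega>))) \<partial>M)
      + (\<integral>\<^sup>+\<omega>. ennreal (\<gamma> * \<beta> / 2 * (norm (gavg gfi (xbar (x (\<beta> * k) \<omega>))))\<^sup>2) \<partial>M)
    \<le> (\<integral>\<^sup>+\<omega>. ennreal (gap (xbar (x (\<beta> * k) \<omega>))) \<partial>M)
      + (\<integral>\<^sup>+\<omega>. ennreal (\<gamma> * \<beta> * L\<^sup>2 / (2 * real CARD('n)) * (norm (xtilde (x (\<beta> * k) \<omega>)))\<^sup>2) \<partial>M)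
      + ennreal (L * \<gamma>\<^sup>2 * \<beta> * \<sigma>\<^sup>2 / (2 * real CARD('n)))"
  (is "?next + ?grad \<le> ?gap + ?cons + ennreal ?noise")
proof -
  define F where "F p = ennreal (gap (xbar (fst p) - \<gamma> *\<^sub>R round_direction k (fst p) (snd p)))
    + ennreal (\<gamma> * \<beta> / 2 * (norm (gavg gfi (xbar (fst p))))\<^sup>2)" for p :: "(real^'p^'n) \<times> (nat \<times> 'n \<Rightarrow> 's)"
  have F_meas: "F \<in> borel_measurable (borel \<Otimes>\<^sub>M PiM (block k) sample_law)"
    unfolding F_def[abs_def] using measurable_round_direction by measurable
  have x_meas: "x (\<beta> * k) \<in> borel_measurable M" by (rule measurable_snapshot)
  have x_next_meas: "x (\<beta> * Suc k) \<in> borel_measurable M" by (rule measurable_snapshot)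
  have "?next + ?grad = (\<integral>\<^sup>+\<omega>. F (x (\<beta> * k) \<omega>, block_samples k \<omega>) \<partial>M)"
    using x_meas x_next_meas by (simp add: F_def xbar_x_next[symmetric] nn_integral_add)
  also have "\<dots> = (\<integral>\<^sup>+\<omega>. (\<integral>\<^sup>+\<omega>'. F (x (\<beta> * k) \<omega>, block_samples k \<omega>') \<partial>M) \<partial>M)"
    by (rule nn_integral_round_iterated[OF F_meas])
  also have "\<dots> \<le> (\<integral>\<^sup>+\<omega>. ennreal (gap (xbar (x (\<beta> * k) \<omega>))) + ennreal (\<gamma> * \<beta> * L\<^sup>2 / (2 * real CARD('n)) *
      (norm (xtilde (x (\<beta> * k) \<omega>)))\<^sup>2) + ennreal ?noise \<partial>M)"
    by (rule nn_integral_mono) (simp only: F_def fst_conv snd_conv round_descent)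
  also have "\<dots> = ?gap + ?cons + ennreal ?noise"
    using x_meas by (simp add: nn_integral_add emeasure_space_1)
  finally show ?thesis .
qed

lemma prob_space_D: "prob_space (D i)"
  using prob_space_distr[OF \<xi>_meas[of 0 i]] by (simp add: \<xi>_distr)

lemma nn_integral_norm_g_le:
  "(\<integral>\<^sup>+s. ennreal ((norm (g i v s))\<^sup>2) \<partial>D i) \<le> ennreal (2 * \<sigma>\<^sup>2 + 4 * (norm (gfi i 0))\<^sup>2 + 4 * L\<^sup>2 * (norm v)\<^sup>2)"
proof -
  interpret Di: prob_space "D i" by (rule prob_space_D)
  have "g i v \<in> borel_measurable (D i)" by (rule measurable_g)
  then have var_meas: "(\<lambda>s. ennreal ((norm (g i v s - gfi i v))\<^sup>2)) \<in> borel_measurable (D i)" by measurable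
  have "(norm (gfi i v))\<^sup>2 \<le> 2 * (norm (gfi i v - gfi i 0))\<^sup>2 + 2 * (norm (gfi i 0))\<^sup>2"
    using norm_add_power2_le[of "gfi i v - gfi i 0" "gfi i 0"] by simp
  also have "(norm (gfi i v - gfi i 0))\<^sup>2 \<le> (L * norm v)\<^sup>2"
    using f_lip[of i v 0] by (intro power_mono) auto
  finally have bias: "(norm (gfi i v))\<^sup>2 \<le> 2 * (norm (gfi i 0))\<^sup>2 + 2 * L\<^sup>2 * (norm v)\<^sup>2"
    by (simp add: power_mult_distrib)
  have pointwise: "ennreal ((norm (g i v s))\<^sup>2)
      \<le> 2 * ennreal ((norm (g i v s - gfi i v))\<^sup>2) + ennreal (2 * (norm (gfi i v))\<^sup>2)" for s
  proof -
    have "ennreal ((norm (g i v s))\<^sup>2) \<le> ennreal (2 * (norm (g i v s - gfi i v))\<^sup>2 + 2 * (norm (gfi i v))\<^sup>2)"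
      using norm_add_power2_le[of "g i v s - gfi i v" "gfi i v"] by (intro ennreal_leI) simp
    then show ?thesis by (simp add: ennreal_plus ennreal_mult)
  qed
  have "(\<integral>\<^sup>+s. ennreal ((norm (g i v s))\<^sup>2) \<partial>D i)
      \<le> (\<integral>\<^sup>+s. 2 * ennreal ((norm (g i v s - gfi i v))\<^sup>2) + ennreal (2 * (norm (gfi i v))\<^sup>2) \<partial>D i)"
    by (intro nn_integral_mono pointwise)
  also have "\<dots> = 2 * (\<integral>\<^sup>+s. ennreal ((norm (g i v s - gfi i v))\<^sup>2) \<partial>D i) + ennreal (2 * (norm (gfi i v))\<^sup>2)"
    using var_meas by (simp add: nn_integral_add nn_integral_cmult Di.emeasure_space_1)
  also have "\<dots> \<le> 2 * ennreal (\<sigma>\<^sup>2) + ennreal (2 * (norm (gfi i v))\<^sup>2)"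
    by (intro add_right_mono mult_left_mono g_var) simp
  also have "\<dots> \<le> ennreal (2 * \<sigma>\<^sup>2 + 4 * (norm (gfi i 0))\<^sup>2 + 4 * L\<^sup>2 * (norm v)\<^sup>2)"
  proof -
    have "2 * ennreal (\<sigma>\<^sup>2) + ennreal (2 * (norm (gfi i v))\<^sup>2) = ennreal (2 * \<sigma>\<^sup>2 + 2 * (norm (gfi i v))\<^sup>2)"
      by (simp add: ennreal_plus ennreal_mult)
    also have "\<dots> \<le> ennreal (2 * \<sigma>\<^sup>2 + 4 * (norm (gfi i 0))\<^sup>2 + 4 * L\<^sup>2 * (norm v)\<^sup>2)"
      using bias by (intro ennreal_leI) linarith
    finally show ?thesis .
  qed
  finally show ?thesis .
qed

lemma nn_integral_norm_stoch_grad_block: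
  fixes X :: "real^'p^'n"
  assumes j: "j < \<beta>"
  shows "(\<integral>\<^sup>+\<omega>. ennreal ((norm (\<chi> i. g i (X $ i) (block_samples k \<omega> (\<beta> * k + j, i))))\<^sup>2) \<partial>M)
    \<le> ennreal ((\<Sum>i\<in>UNIV. 2 * \<sigma>\<^sup>2 + 4 * (norm (gfi i 0))\<^sup>2) + 4 * L\<^sup>2 * (norm X)\<^sup>2)"
proof -
  define t where "t = \<beta> * k + j"
  have g_meas_sq: "(\<lambda>s. ennreal ((norm (g i (X $ i) s))\<^sup>2)) \<in> borel_measurable (D i)" for i
    using measurable_g[of i "X $ i"] by measurable
  have "(\<integral>\<^sup>+\<omega>. ennreal ((norm (\<chi> i. g i (X $ i) (block_samples k \<omega> (\<beta> * k + j, i))))\<^sup>2) \<partial>M)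
      = (\<integral>\<^sup>+\<omega>. (\<Sum>i\<in>UNIV. ennreal ((norm (g i (X $ i) (\<xi> t i \<omega>)))\<^sup>2)) \<partial>M)"
    by (intro nn_integral_cong, subst norm_vec_power2)
      (simp add: block_samples_apply[OF j] t_def flip: sum_ennreal)
  also have "\<dots> = (\<Sum>i\<in>UNIV. (\<integral>\<^sup>+s. ennreal ((norm (g i (X $ i) s))\<^sup>2) \<partial>D i))"
    using measurable_compose[OF \<xi>_meas g_meas_sq]
    by (simp add: nn_integral_sum nn_integral_\<xi>[OF g_meas_sq] del: sum_ennreal)
  also have "\<dots> \<le> (\<Sum>i\<in>UNIV. ennreal (2 * \<sigma>\<^sup>2 + 4 * (norm (gfi i 0))\<^sup>2 + 4 * L\<^sup>2 * (norm (X $ i))\<^sup>2))"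
    by (intro sum_mono nn_integral_norm_g_le)
  also have "\<dots> = ennreal (\<Sum>i\<in>UNIV. 2 * \<sigma>\<^sup>2 + 4 * (norm (gfi i 0))\<^sup>2 + 4 * L\<^sup>2 * (norm (X $ i))\<^sup>2)"
    by (rule sum_ennreal) simp
  also have "(\<Sum>i\<in>UNIV. 2 * \<sigma>\<^sup>2 + 4 * (norm (gfi i 0))\<^sup>2 + 4 * L\<^sup>2 * (norm (X $ i))\<^sup>2)
      = (\<Sum>i\<in>UNIV. 2 * \<sigma>\<^sup>2 + 4 * (norm (gfi i 0))\<^sup>2) + 4 * L\<^sup>2 * (norm X)\<^sup>2"
    by (simp add: sum.distrib sum_distrib_left norm_vec_power2[of X])
  finally show ?thesis .
qed

lemma measurable_stoch_grad:
  assumes "j < \<beta>"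
  shows "G (\<beta> * k + j) \<in> borel_measurable M"
proof -
  have "x (\<beta> * k) \<in> borel_measurable (past (\<beta> * k + \<beta>))"
    by (rule measurable_past_mono[OF conjunct1[OF measurable_snapshot_past]]) simp
  then have "G (\<beta> * k + j) \<in> borel_measurable (past (\<beta> * k + \<beta>))"
    by (rule measurable_stoch_grad_past) (use assms in simp_all)
  then show ?thesis by (rule measurable_past_imp_measurable)
qed

lemma finite_second_moment_stoch_grad:
  assumes x: "finite_second_moment M (x (\<beta> * k))" and j: "j < \<beta>"
  shows "finite_second_moment M (G (\<beta> * k + j))"
proof -
  define C where "C = (\<Sum>i\<in>(UNIV :: 'n set). 2 * \<sigma>\<^sup>2 + 4 * (norm (gfi i 0))\<^sup>2)"
  have C: "C \<ge> 0" by (simp add: C_def sum_nonneg)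
  define F where "F p = ennreal ((norm (\<chi> i. g i (fst p $ i) (snd p (\<beta> * k + j, i))))\<^sup>2)"
    for p :: "(real^'p^'n) \<times> (nat \<times> 'n \<Rightarrow> 's)"
  have "(\<lambda>p. \<chi> i. g i (fst p $ i) (snd p (\<beta> * k + j, i))) \<in> borel_measurable (borel \<Otimes>\<^sub>M PiM (block k) sample_law)"
    using j by (intro borel_measurable_vec_lambda measurable_g_comp measurable_block_component) measurable
  then have F_meas: "F \<in> borel_measurable (borel \<Otimes>\<^sub>M PiM (block k) sample_law)"
    unfolding F_def[abs_def] by measurable
  have x_meas: "x (\<beta> * k) \<in> borel_measurable M" by (rule measurable_snapshot)
  then have x_sq_meas: "(\<lambda>\<omega>. ennreal ((norm (x (\<beta> * k) \<omega>))\<^sup>2)) \<in> borel_measurable M" by measurable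
  have "(\<integral>\<^sup>+\<omega>. ennreal ((norm (G (\<beta> * k + j) \<omega>))\<^sup>2) \<partial>M) = (\<integral>\<^sup>+\<omega>. F (x (\<beta> * k) \<omega>, block_samples k \<omega>) \<partial>M)"
    by (intro nn_integral_cong) (simp add: F_def stoch_grad_in_round[OF j] block_samples_apply[OF j])
  also have "\<dots> = (\<integral>\<^sup>+\<omega>. (\<integral>\<^sup>+\<omega>'. F (x (\<beta> * k) \<omega>, block_samples k \<omega>') \<partial>M) \<partial>M)"
    by (rule nn_integral_round_iterated[OF F_meas])
  also have "\<dots> \<le> (\<integral>\<^sup>+\<omega>. ennreal C + ennreal (4 * L\<^sup>2) * ennreal ((norm (x (\<beta> * k) \<omega>))\<^sup>2) \<partial>M)"
    using nn_integral_norm_stoch_grad_block[OF j] C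
    by (intro nn_integral_mono) (simp add: F_def C_def ennreal_plus ennreal_mult)
  also have "\<dots> = ennreal C + ennreal (4 * L\<^sup>2) * (\<integral>\<^sup>+\<omega>. ennreal ((norm (x (\<beta> * k) \<omega>))\<^sup>2) \<partial>M)"
    using x_sq_meas by (simp add: nn_integral_add nn_integral_cmult emeasure_space_1)
  also have "\<dots> < \<infinity>" using x by (simp add: finite_second_moment_def ennreal_mult_less_top)
  finally show ?thesis using measurable_stoch_grad[OF j] by (simp add: finite_second_moment_def)
qed

lemma finite_second_moment_iterates:
  "finite_second_moment M (x (\<beta> * k)) \<and> finite_second_moment M (y (\<beta> * k))"
proof (induction k)
  case 0
  have "x 0 = (\<lambda>\<omega>. x0)" using x_init by auto
  then have x0: "finite_second_moment M (x (\<beta> * 0))"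
    using finite_second_moment_const[OF M, of x0] by simp
  have "finite_second_moment M (G (\<beta> * 0 + 0))"
    using \<beta> by (intro finite_second_moment_stoch_grad[OF x0]) simp
  moreover have "y 0 = G 0" using y_init by auto
  ultimately show ?case using x0 by simp
next
  case (Suc k)
  then have xk: "finite_second_moment M (x (\<beta> * k))" and yk: "finite_second_moment M (y (\<beta> * k))"
    by auto
  have Gk: "finite_second_moment M (G (\<beta> * k + j))" if "j < \<beta>" for j
    by (rule finite_second_moment_stoch_grad[OF xk that])
  have Gk0: "finite_second_moment M (G (\<beta> * k))" using Gk[of 0] \<beta> by simp
  have "finite_second_moment M (\<lambda>\<omega>. Wbar ** (x (\<beta> * k) \<omega>
      - \<gamma> *\<^sub>R (\<Sum>j<\<beta>. y (\<beta> * k) \<omega> + G (\<beta> * k + j) \<omega> - G (\<beta> * k) \<omega>)))"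
    by (intro finite_second_moment_linear[OF linear_matrix_matrix_mult] finite_second_moment_diff xk
        finite_second_moment_scaleR finite_second_moment_sum finite_second_moment_add yk Gk Gk0) auto
  moreover have "x (\<beta> * (k + 1)) = (\<lambda>\<omega>. Wbar ** (x (\<beta> * k) \<omega>
      - \<gamma> *\<^sub>R (\<Sum>j<\<beta>. y (\<beta> * k) \<omega> + G (\<beta> * k + j) \<omega> - G (\<beta> * k) \<omega>)))"
    by (rule ext) (rule x_round_snapshot)
  ultimately have xk1: "finite_second_moment M (x (\<beta> * (k + 1)))" by simp
  have "finite_second_moment M (G (\<beta> * (k + 1) + 0))"
    using \<beta> by (intro finite_second_moment_stoch_grad[OF xk1]) simp
  then have "finite_second_moment M (\<lambda>\<omega>. Wbar ** (y (\<beta> * k) \<omega> + G (\<beta> * (k + 1)) \<omega> - G (\<beta> * k) \<omega>))"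
    by (intro finite_second_moment_linear[OF linear_matrix_matrix_mult] finite_second_moment_diff
        finite_second_moment_add yk Gk0) simp_all
  moreover have "y (\<beta> * (k + 1)) = (\<lambda>\<omega>. Wbar ** (y (\<beta> * k) \<omega> + G (\<beta> * (k + 1)) \<omega> - G (\<beta> * k) \<omega>))"
    by (rule ext) (rule y_round)
  ultimately have "finite_second_moment M (y (\<beta> * (k + 1)))" by simp
  with xk1 show ?case by simp
qed

section \<open>Telescoping over rounds\<close>

lemma telescoped_rounds:
  "(\<integral>\<^sup>+\<omega>. ennreal (gap (xbar (x (\<beta> * K) \<omega>))) \<partial>M)
      + (\<Sum>k<K. \<integral>\<^sup>+\<omega>. ennreal (\<gamma> * \<beta> / 2 * (norm (gavg gfi (xbar (x (\<beta> * k) \<omega>))))\<^sup>2) \<partial>M)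
    \<le> ennreal (gap (xbar x0))
      + (\<Sum>k<K. \<integral>\<^sup>+\<omega>. ennreal (\<gamma> * \<beta> * L\<^sup>2 / (2 * real CARD('n)) * (norm (xtilde (x (\<beta> * k) \<omega>)))\<^sup>2) \<partial>M)
      + ennreal (real K * (L * \<gamma>\<^sup>2 * \<beta> * \<sigma>\<^sup>2 / (2 * real CARD('n))))"
proof -
  define A where "A k = (\<integral>\<^sup>+\<omega>. ennreal (gap (xbar (x (\<beta> * k) \<omega>))) \<partial>M)" for k
  define B where "B k = (\<integral>\<^sup>+\<omega>. ennreal (\<gamma> * \<beta> / 2 * (norm (gavg gfi (xbar (x (\<beta> * k) \<omega>))))\<^sup>2) \<partial>M)" for k
  define C where "C k = (\<integral>\<^sup>+\<omega>. ennreal (\<gamma> * \<beta> * L\<^sup>2 / (2 * real CARD('n)) * (norm (xtilde (x (\<beta> * k) \<omega>)))\<^sup>2) \<partial>M)"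
    for k
  define c where "c = L * \<gamma>\<^sup>2 * \<beta> * \<sigma>\<^sup>2 / (2 * real CARD('n))"
  have c: "c \<ge> 0" using L_pos by (simp add: c_def)
  have step: "A (Suc k) + B k \<le> A k + C k + ennreal c" for k
    using round_inequality[of k] by (simp add: A_def B_def C_def c_def)
  have "A K + (\<Sum>k<K. B k) \<le> ennreal (gap (xbar x0)) + (\<Sum>k<K. C k) + ennreal (real K * c)"
  proof (induction K)
    case 0
    show ?case by (simp add: A_def x_init emeasure_space_1)
  next
    case (Suc K)
    have "A (Suc K) + (\<Sum>k<Suc K. B k) = (A (Suc K) + B K) + (\<Sum>k<K. B k)" by (simp add: add_ac)
    also have "\<dots> \<le> (A K + C K + ennreal c) + (\<Sum>k<K. B k)" by (intro add_right_mono step)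
    also have "\<dots> = (A K + (\<Sum>k<K. B k)) + C K + ennreal c" by (simp add: add_ac)
    also have "\<dots> \<le> (ennreal (gap (xbar x0)) + (\<Sum>k<K. C k) + ennreal (real K * c)) + C K + ennreal c"
      by (intro add_right_mono Suc.IH)
    also have "\<dots> = ennreal (gap (xbar x0)) + (\<Sum>k<Suc K. C k) + ennreal (real (Suc K) * c)"
      using c by (simp add: add_ac distrib_right ennreal_plus[symmetric] del: ennreal_plus)
    finally show ?case .
  qed
  then show ?thesis unfolding A_def B_def C_def c_def .
qed

lemma sum_expectation_rounds_le:
  "\<gamma> * \<beta> / 2 * (\<Sum>k<K. expectation (\<lambda>\<omega>. (norm (gavg gfi (xbar (x (\<beta> * k) \<omega>))))\<^sup>2))
    \<le> gap (xbar x0)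
      + \<gamma> * \<beta> * L\<^sup>2 / (2 * real CARD('n)) * (\<Sum>k<K. expectation (\<lambda>\<omega>. (norm (xtilde (x (\<beta> * k) \<omega>)))\<^sup>2))
      + real K * (L * \<gamma>\<^sup>2 * \<beta> * \<sigma>\<^sup>2 / (2 * real CARD('n)))"
proof -
  define grad where "grad k = (\<lambda>\<omega>. (norm (gavg gfi (xbar (x (\<beta> * k) \<omega>))))\<^sup>2)" for k
  define cons where "cons k = (\<lambda>\<omega>. (norm (xtilde (x (\<beta> * k) \<omega>)))\<^sup>2)" for k
  define a where "a = \<gamma> * \<beta> / 2"
  define b where "b = \<gamma> * \<beta> * L\<^sup>2 / (2 * real CARD('n))"
  define c where "c = L * \<gamma>\<^sup>2 * \<beta> * \<sigma>\<^sup>2 / (2 * real CARD('n))"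
  have a: "a > 0" using \<gamma>_pos \<beta> by (simp add: a_def)
  have b: "b \<ge> 0" and c: "c \<ge> 0" using \<gamma>_pos L_pos by (simp_all add: b_def c_def)
  have grad_le: "ennreal (a * expectation (grad k)) \<le> (\<integral>\<^sup>+\<omega>. ennreal (a * grad k \<omega>) \<partial>M)" for k
  proof -
    have "(\<lambda>\<omega>. a * grad k \<omega>) \<in> borel_measurable M"
      using measurable_snapshot[of k] by (simp add: grad_def)
    from ennreal_integral_le_nn_integral[OF this] show ?thesis using a by (simp add: grad_def)
  qed
  have cons_eq: "(\<integral>\<^sup>+\<omega>. ennreal (b * cons k \<omega>) \<partial>M) = ennreal (b * expectation (cons k))" for k
  proof -
    have "integrable M (cons k)"
      unfolding cons_def using finite_second_moment_integrable[OF
          finite_second_moment_linear[OF linear_xtilde conjunct1[OF finite_second_moment_iterates]]] .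
    then show ?thesis using b by (subst nn_integral_eq_integral) (auto simp: cons_def)
  qed
  have cons_nonneg: "expectation (cons k) \<ge> 0" for k
    by (simp add: cons_def)
  have "ennreal (a * (\<Sum>k<K. expectation (grad k))) = (\<Sum>k<K. ennreal (a * expectation (grad k)))"
    using a by (simp add: sum_distrib_left sum_ennreal grad_def)
  also have "\<dots> \<le> (\<Sum>k<K. \<integral>\<^sup>+\<omega>. ennreal (a * grad k \<omega>) \<partial>M)"
    by (intro sum_mono grad_le)
  also have "\<dots> \<le> ennreal (gap (xbar x0)) + (\<Sum>k<K. \<integral>\<^sup>+\<omega>. ennreal (b * cons k \<omega>) \<partial>M) + ennreal (real K * c)"
    using telescoped_rounds[of K] by (auto simp: a_def b_def c_def grad_def cons_def intro: order_trans[rotated])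
  also have "(\<Sum>k<K. \<integral>\<^sup>+\<omega>. ennreal (b * cons k \<omega>) \<partial>M) = ennreal (b * (\<Sum>k<K. expectation (cons k)))"
    using b cons_nonneg by (simp add: cons_eq sum_distrib_left sum_ennreal)
  also have "ennreal (gap (xbar x0)) + \<dots> + ennreal (real K * c)
      = ennreal (gap (xbar x0) + b * (\<Sum>k<K. expectation (cons k)) + real K * c)"
    using gap_nonneg[of "xbar x0"] b c cons_nonneg by (simp add: sum_nonneg)
  finally have "a * (\<Sum>k<K. expectation (grad k)) \<le> gap (xbar x0) + b * (\<Sum>k<K. expectation (cons k)) + real K * c"
    using gap_nonneg[of "xbar x0"] b c cons_nonneg
    by (subst (asm) ennreal_le_iff) (auto intro!: add_nonneg_nonneg mult_nonneg_nonneg sum_nonneg)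
  then show ?thesis by (simp add: a_def b_def c_def grad_def cons_def)
qed

lemma average_gradient_bound:
  assumes K: "K \<ge> 1"
  shows "(1 / real K) * (\<Sum>k<K. expectation (\<lambda>\<omega>. (norm (gavg gfi (xbar (x (\<beta> * k) \<omega>))))\<^sup>2))
    \<le> 2 * gap (xbar x0) / (\<gamma> * real \<beta> * real K)
      + L\<^sup>2 / real CARD('n) * ((1 / real K) * (\<Sum>k<K. expectation (\<lambda>\<omega>. (norm (xtilde (x (\<beta> * k) \<omega>)))\<^sup>2)))
      + \<gamma> * L / real CARD('n) * \<sigma>\<^sup>2"
proof -
  define n where "n = real CARD('n)"
  define Sg where "Sg = (\<Sum>k<K. expectation (\<lambda>\<omega>. (norm (gavg gfi (xbar (x (\<beta> * k) \<omega>))))\<^sup>2))"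
  define Sc where "Sc = (\<Sum>k<K. expectation (\<lambda>\<omega>. (norm (xtilde (x (\<beta> * k) \<omega>)))\<^sup>2))"
  have pos: "\<gamma> > 0" "real \<beta> > 0" "real K > 0" "n > 0" using \<gamma>_pos \<beta> K by (simp_all add: n_def)
  have "\<gamma> * \<beta> / 2 * Sg \<le> gap (xbar x0) + \<gamma> * \<beta> * L\<^sup>2 / (2 * n) * Sc + real K * (L * \<gamma>\<^sup>2 * \<beta> * \<sigma>\<^sup>2 / (2 * n))"
    using sum_expectation_rounds_le[of K] by (simp add: Sg_def Sc_def n_def)
  then have "(1 / real K) * Sg \<le> 2 / (\<gamma> * real \<beta> * real K)
      * (gap (xbar x0) + \<gamma> * \<beta> * L\<^sup>2 / (2 * n) * Sc + real K * (L * \<gamma>\<^sup>2 * \<beta> * \<sigma>\<^sup>2 / (2 * n)))"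
    using pos by (simp add: field_simps)
  also have "\<dots> = 2 * gap (xbar x0) / (\<gamma> * real \<beta> * real K) + L\<^sup>2 / n * ((1 / real K) * Sc) + \<gamma> * L / n * \<sigma>\<^sup>2"
    using pos by (simp add: field_simps power2_eq_square)
  finally show ?thesis by (simp add: Sg_def Sc_def n_def)
qed

end

lemma stepsize_condition:
  assumes "\<gamma> > 0" "\<beta> \<ge> 1" "\<gamma> \<le> 1 / (4 * L * real \<beta>)"
  shows "L > 0" "\<gamma> * real \<beta> * L \<le> 1"
proof -
  show L: "L > 0"
  proof (rule ccontr)
    assume "\<not> L > 0"
    then have "1 / (4 * L * real \<beta>) \<le> 0"
      using assms(2) by (simp add: divide_le_0_iff mult_nonpos_nonneg)
    then show False using assms(1,3) by linarith
  qed
  then have "\<gamma> * (4 * L * real \<beta>) \<le> 1" using assms by (simp add: le_divide_eq)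
  then show "\<gamma> * real \<beta> * L \<le> 1" using assms(1) L by (simp add: algebra_simps)
qed

theorem lemma3:
  fixes M :: "'a measure"
    and D :: "'n::finite \<Rightarrow> 's measure"
    and \<xi> :: "nat \<Rightarrow> 'n \<Rightarrow> 'a \<Rightarrow> 's"
    and fi :: "'n \<Rightarrow> real^'p::finite \<Rightarrow> real"
    and gfi :: "'n \<Rightarrow> real^'p \<Rightarrow> real^'p"
    and g :: "'n \<Rightarrow> real^'p \<Rightarrow> 's \<Rightarrow> real^'p"
    and W Wbar :: "real^'n^'n"
    and x y :: "nat \<Rightarrow> 'a \<Rightarrow> real^'p^'n"
    and x0 :: "real^'p^'n"
    and L \<sigma> \<gamma> :: real
    and \<alpha> \<beta> K :: nat
  assumes M: "prob_space M"
    \<comment> \<open>samples: xi_{t,i} ~ D_i, independent across nodes and iterations\<close>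
    and \<xi>_meas: "\<And>t i. \<xi> t i \<in> measurable M (D i)"
    and \<xi>_distr: "\<And>t i. distr M (D i) (\<xi> t i) = D i"
    and \<xi>_indep: "prob_space.indep_vars M (\<lambda>(t,i). D i) (\<lambda>(t,i). \<xi> t i) UNIV"
    \<comment> \<open>stochastic gradient oracle: measurable, unbiased, bounded variance (V)\<close>
    and g_meas: "\<And>i. (\<lambda>(v,s). g i v s) \<in> borel_measurable (borel \<Otimes>\<^sub>M D i)"
    and g_unbiased: "\<And>i v. integrable (D i) (g i v) \<and> (\<integral>s. g i v s \<partial>D i) = gfi i v"
    and g_var: "\<And>i v. (\<integral>\<^sup>+ s. ennreal ((norm (g i v s - gfi i v))\<^sup>2) \<partial>D i) \<le> ennreal (\<sigma>\<^sup>2)"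
    \<comment> \<open>(S): gfi i is the gradient of fi i and is L-Lipschitz; f^* finite\<close>
    and f_grad: "\<And>i v. (fi i has_derivative (\<lambda>h. gfi i v \<bullet> h)) (at v)"
    and f_lip: "\<And>i u v. norm (gfi i u - gfi i v) \<le> L * norm (u - v)"
    and f_bdd: "bdd_below (range (favg fi))"
    \<comment> \<open>(G): mixing matrix\<close>
    and W_ds: "doubly_stochastic W"
    and W_rho: "rhoW W < 1"
    \<comment> \<open>algorithm parameters: FlexGT or Acc-FlexGT\<close>
    and \<alpha>: "\<alpha> \<ge> 1" and \<beta>: "\<beta> \<ge> 1" and \<gamma>_pos: "\<gamma> > 0"
    and Wbar: "Wbar = matpow W \<alpha> \<or> Wbar = accM W \<alpha>"
    \<comment> \<open>the recursion\<close>
    and x_init: "\<And>\<omega>. x 0 \<omega> = x0"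
    and y_init: "\<And>\<omega>. y 0 \<omega> = stoch_grad g \<xi> x \<beta> 0 \<omega>"
    and x_inner: "\<And>k j \<omega>. j + 2 \<le> \<beta> \<Longrightarrow>
         x (\<beta> * k + j + 1) \<omega> = x (\<beta> * k + j) \<omega> - \<gamma> *\<^sub>R y (\<beta> * k + j) \<omega>"
    and y_inner: "\<And>k j \<omega>. j + 2 \<le> \<beta> \<Longrightarrow>
         y (\<beta> * k + j + 1) \<omega> = y (\<beta> * k + j) \<omega>
            + stoch_grad g \<xi> x \<beta> (\<beta> * k + j + 1) \<omega> - stoch_grad g \<xi> x \<beta> (\<beta> * k + j) \<omega>"
    and x_round: "\<And>k \<omega>. x (\<beta> * (k + 1)) \<omega> =
         Wbar ** (x (\<beta> * k) \<omega> - \<gamma> *\<^sub>R (\<Sum>j<\<beta>. y (\<beta> * k + j) \<omega>))"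
    and y_round: "\<And>k \<omega>. y (\<beta> * (k + 1)) \<omega> =
         Wbar ** (y (\<beta> * k) \<omega> + stoch_grad g \<xi> x \<beta> (\<beta> * (k + 1)) \<omega>
                   - stoch_grad g \<xi> x \<beta> (\<beta> * k) \<omega>)"
    \<comment> \<open>stepsize condition\<close>
    and \<gamma>_le: "\<gamma> \<le> 1 / (4 * L * real \<beta>)"
    and K: "K \<ge> 1"
  shows "(1 / real K) * (\<Sum>k<K. prob_space.expectation M
             (\<lambda>\<omega>. (norm (gavg gfi (xbar (x (\<beta> * k) \<omega>))))\<^sup>2))
         \<le> 4 * (prob_space.expectation M (\<lambda>\<omega>. favg fi (xbar (x 0 \<omega>))) - fstar fi)
               / (\<gamma> * real \<beta> * real K)
           + 4 * L\<^sup>2 / real CARD('n) * ((1 / real K) * (\<Sum>k<K. prob_space.expectation M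
               (\<lambda>\<omega>. (norm (xtilde (x (\<beta> * k) \<omega>)))\<^sup>2)))
           + 2 * \<gamma> * L / real CARD('n) * \<sigma>\<^sup>2"
proof -
  have L_pos: "L > 0" and stepsize: "\<gamma> * real \<beta> * L \<le> 1"
    using stepsize_condition[OF \<gamma>_pos \<beta> \<gamma>_le] by auto
  have Wbar_sums: "unit_column_sums Wbar"
    using Wbar doubly_stochastic_imp_unit_column_sums[OF W_ds]
    by (auto intro: unit_column_sums_matpow unit_column_sums_accM)
  interpret flexgt M D \<xi> fi gfi g Wbar x y x0 L \<sigma> \<gamma> \<beta>
    by (rule flexgt.intro[OF M \<xi>_meas \<xi>_distr \<xi>_indep g_meas g_unbiased g_var f_grad f_lip f_bdd
        Wbar_sums \<beta> \<gamma>_pos L_pos stepsize x_init y_init y_inner x_round y_round])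
  have gap0: "expectation (\<lambda>\<omega>. favg fi (xbar (x 0 \<omega>))) - fstar fi = gap (xbar x0)"
    by (simp add: x_init gap_def prob_space)
  have "0 \<le> (\<Sum>k<K. expectation (\<lambda>\<omega>. (norm (xtilde (x (\<beta> * k) \<omega>)))\<^sup>2))"
    by (intro sum_nonneg) simp
  with gap_nonneg[of "xbar x0"] average_gradient_bound[OF K] show ?thesis
    unfolding gap0 using \<gamma>_pos \<beta> L_pos
    by (elim order_trans, intro add_mono divide_right_mono mult_right_mono) auto
qed

end
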